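(* Let $\mathcal M$ be a Type $\mathcal A$ affine surface geometry and let $\mathcal Q_c:=\mathcal Q(\mathcal M)\otimes_{\mathbb R}\mathbb C$. (1) $\mathcal Q_c$ has a basis consisting of functions of the form $e^{\alpha_1x^1+\alpha_2x^2}p(x^1,x^2)$, where $(\alpha_1,\alpha_2)\in\mathbb C^2$, $p$ is a (complex) polynomial of degree at most $2$ in $(x^1,x^2)$, and $e^{\alpha_1x^1+\alpha_2x^2}\in\mathcal Q_c$. (2) There exist real linear functions $L_1,L_2,L_3$, a real polynomial $Q$ of degree at most $2$, and a basis $\mathcal B$ of $\mathcal Q(\mathcal M)$ of one of the following four forms: $\mathcal B=\{e^{L_1}\cos(L_2),e^{L_1}\sin(L_2),e^{L_3}\}$, $\mathcal B=\{e^{L_1},e^{L_2},e^{L_3}\}$, $\mathcal B=\{e^{L_1},L_2e^{L_1},e^{L_3}\}$, or $\mathcal B=\{e^{L_1},L_2e^{L_1},Qe^{L_1}\}$.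
   Context: An affine manifold $(M,\nabla)$ is a smooth manifold $M$ of dimension $m\ge 2$ with a torsion-free connection $\nabla$ on $TM$; in local coordinates $\nabla_{\partial_{x^i}}\partial_{x^j}=\Gamma_{ij}^k\partial_{x^k}$ (summation over repeated indices). The curvature is $R(X,Y)Z=\nabla_X\nabla_YZ-\nabla_Y\nabla_XZ-\nabla_{[X,Y]}Z$, the Ricci tensor is $\rho(Y,Z)=\mathrm{Tr}(X\mapsto R(X,Y)Z)$, and $\rho_s(X,Y)=\frac12(\rho(X,Y)+\rho(Y,X))$. The Hessian is $\mathcal H_\nabla f=(\partial_{x^i}\partial_{x^j}f-\Gamma_{ij}^k\partial_{x^k}f)\,dx^i\otimes dx^j$. The quasi-Einstein solution space is $\mathcal Q(M,\nabla)=\{f\in C^\infty(M):\mathcal H_\nabla f+\frac{1}{m-1}f\rho_s=0\}$. For real constants, $\Gamma(a,b,c,d,e,f)$ denotes the connection on (an open subset of) $\mathbb R^2$ whose Christoffel symbols in the standard coordinates $(x^1,x^2)$ are the constants $\Gamma_{11}^1=a$, $\Gamma_{11}^2=b$, $\Gamma_{12}^1=\Gamma_{21}^1=c$, $\Gamma_{12}^2=\Gamma_{21}^2=d$, $\Gamma_{22}^1=e$, $\Gamma_{22}^2=f$. A Type $\mathcal A$ affine surface geometry is $(\mathbb R^2,\Gamma(a,b,c,d,e,f))$. A (real) linear function is a function $L(x^1,x^2)=\alpha_1x^1+\alpha_2x^2$ with $\alpha_1,\alpha_2\in\mathbb R$. *)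

theory Defs
  imports "HOL-Analysis.Analysis"
begin

text \<open>Points of the affine surface R^2 are pairs (x1,x2). Coordinate indices are 1 and 2.\<close>

definition pd :: "nat \<Rightarrow> (real \<times> real \<Rightarrow> real) \<Rightarrow> real \<times> real \<Rightarrow> real" where
  "pd i u = (\<lambda>(x, y). if i = 1 then deriv (\<lambda>t. u (t, y)) x else deriv (\<lambda>t. u (x, t)) y)"

text \<open>C^infinity functions on R^2: differentiable everywhere, with both partial
  derivatives again C^infinity (coinductively).\<close>
coinductive smooth2 :: "(real \<times> real \<Rightarrow> real) \<Rightarrow> bool" where
  "(\<forall>p. u differentiable (at p)) \<Longrightarrow> smooth2 (pd 1 u) \<Longrightarrow> smooth2 (pd 2 u) \<Longrightarrow> smooth2 u"

text \<open>A connection on (an open subset of) R^2 given by its Christoffel symbols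
  G i j k p = Gamma_ij^k at the point p.\<close>
type_synonym christoffel = "nat \<Rightarrow> nat \<Rightarrow> nat \<Rightarrow> real \<times> real \<Rightarrow> real"

definition idx :: "nat set" where "idx = {1, 2}"

text \<open>R(d_i,d_j)d_k = R_ijk^l d_l\<close>
definition curv :: "christoffel \<Rightarrow> nat \<Rightarrow> nat \<Rightarrow> nat \<Rightarrow> nat \<Rightarrow> real \<times> real \<Rightarrow> real" where
  "curv G i j k l p = pd i (G j k l) p - pd j (G i k l) p
     + (\<Sum>n\<in>idx. G j k n p * G i n l p - G i k n p * G j n l p)"

definition ricci :: "christoffel \<Rightarrow> nat \<Rightarrow> nat \<Rightarrow> real \<times> real \<Rightarrow> real" where
  "ricci G j k p = (\<Sum>i\<in>idx. curv G i j k i p)"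

definition ricci_s :: "christoffel \<Rightarrow> nat \<Rightarrow> nat \<Rightarrow> real \<times> real \<Rightarrow> real" where
  "ricci_s G j k p = (ricci G j k p + ricci G k j p) / 2"

definition hess :: "christoffel \<Rightarrow> (real \<times> real \<Rightarrow> real) \<Rightarrow> nat \<Rightarrow> nat \<Rightarrow> real \<times> real \<Rightarrow> real" where
  "hess G u i j p = pd i (pd j u) p - (\<Sum>k\<in>idx. G i j k p * pd k u p)"

text \<open>Quasi-Einstein solution space, m = dim M = 2.\<close>
definition QE :: "christoffel \<Rightarrow> (real \<times> real \<Rightarrow> real) set" where
  "QE G = {u. smooth2 u \<and>
     (\<forall>i\<in>idx. \<forall>j\<in>idx. \<forall>p. hess G u i j p + (1 / (real 2 - 1)) * u p * ricci_s G i j p = 0)}"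

text \<open>Complexification Q \<otimes>_R C, realised as complex-valued functions g + i h with g, h in Q.\<close>
definition QEc :: "christoffel \<Rightarrow> (real \<times> real \<Rightarrow> complex) set" where
  "QEc G = {(\<lambda>p. complex_of_real (g p) + \<i> * complex_of_real (h p)) | g h. g \<in> QE G \<and> h \<in> QE G}"

definition GammaA :: "real \<Rightarrow> real \<Rightarrow> real \<Rightarrow> real \<Rightarrow> real \<Rightarrow> real \<Rightarrow> christoffel" where
  "GammaA a b c d e f = (\<lambda>i j k p.
     if i = 1 \<and> j = 1 then (if k = 1 then a else b)
     else if i = 2 \<and> j = 2 then (if k = 1 then e else f)
     else (if k = 1 then c else d))"

definition fin_basis :: "('x \<Rightarrow> 'k::field) set \<Rightarrow> ('x \<Rightarrow> 'k) set \<Rightarrow> bool" where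
  "fin_basis S B \<longleftrightarrow> finite B \<and> B \<subseteq> S
     \<and> (\<forall>u\<in>S. \<exists>c. u = (\<lambda>p. \<Sum>b\<in>B. c b * b p))
     \<and> (\<forall>c. (\<lambda>p. \<Sum>b\<in>B. c b * b p) = (\<lambda>p. 0) \<longrightarrow> (\<forall>b\<in>B. c b = 0))"

definition real_linear_fn :: "(real \<times> real \<Rightarrow> real) \<Rightarrow> bool" where
  "real_linear_fn L \<longleftrightarrow> (\<exists>\<alpha>1 \<alpha>2. L = (\<lambda>(x, y). \<alpha>1 * x + \<alpha>2 * y))"

definition real_poly_deg2 :: "(real \<times> real \<Rightarrow> real) \<Rightarrow> bool" where
  "real_poly_deg2 Q \<longleftrightarrow> (\<exists>c0 c1 c2 c3 c4 c5.
     Q = (\<lambda>(x, y). c0 + c1 * x + c2 * y + c3 * x\<^sup>2 + c4 * x * y + c5 * y\<^sup>2))"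

end

theory Submission
  imports Defs "HOL-Real_Asymp.Real_Asymp"
begin

text \<open>Along every coordinate line, a solution \<open>u\<close> of the quasi-Einstein equation of a Type A
  connection together with \<open>\<partial>\<^sub>1u\<close> and \<open>\<partial>\<^sub>2u\<close> satisfies a linear ODE with constant coefficients, so \<open>u\<close> is
  determined by its 1-jet at the origin and the solution space has dimension at most three.
  Conversely \<open>e\<^bsup>z\<^sub>1x + z\<^sub>2y\<^esup>p(x, y)\<close> is a solution as soon as \<open>(z\<^sub>1 - d, z\<^sub>2 - c)\<close> lies on the variety
  \<open>X(X + P) = b(Y + R), XY = be, Y(Y + R) = e(X + P)\<close> (with \<open>P = 2d - a\<close>, \<open>R = 2c - f\<close>) and \<open>p\<close> satisfies
  the tangential conditions of its multiplicity there. For \<open>b \<noteq> 0\<close> the points of the variety are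
  parametrised by the roots of a real cubic; its four root configurations (a complex pair, three
  simple, a double and a triple root) produce three solutions with independent 1-jets, which are
  the four normal forms of the basis. The case \<open>b = 0\<close> follows by exchanging the coordinates or
  directly.\<close>

(* Keeps the index in pd 1 literal: by default simp rewrites 1::nat to Suc 0, after which no rule
   stated for pd 1 applies. *)
declare One_nat_def [simp del]

lemma has_derivative_along_line:
  assumes "(u has_derivative D) (at (g t0))" and "(g has_derivative (\<lambda>h. h *\<^sub>R v)) (at t0)"
  shows "((\<lambda>t. u (g t)) has_real_derivative D v) (at t0)"
proof -
  have "((\<lambda>t. u (g t)) has_derivative (\<lambda>h. D (h *\<^sub>R v))) (at t0)"
    using has_derivative_compose[OF assms(2,1)] .
  moreover have "(\<lambda>h. D (h *\<^sub>R v)) = (*) (D v)"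
    using linear_scale[OF has_derivative_linear[OF assms(1)]] by (auto simp: fun_eq_iff mult.commute)
  ultimately show ?thesis by (simp add: has_field_derivative_def)
qed

lemma has_derivative_partial:
  assumes "(u has_derivative D) (at (x, y))"
  shows "((\<lambda>t. u (t, y)) has_real_derivative D (1, 0)) (at x)"
    and "((\<lambda>t. u (x, t)) has_real_derivative D (0, 1)) (at y)"
  by (rule has_derivative_along_line; use assms in \<open>auto intro!: derivative_eq_intros\<close>)+

lemma pd_eq_derivative:
  assumes "(u has_derivative D) (at (x, y))"
  shows "pd 1 u (x, y) = D (1, 0)" and "pd 2 u (x, y) = D (0, 1)"
  using has_derivative_partial[OF assms] by (simp_all add: pd_def DERIV_imp_deriv)

lemma differentiable_partials:
  assumes "u differentiable (at (x, y))"
  shows "((\<lambda>t. u (t, y)) has_real_derivative pd 1 u (x, y)) (at x)"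
    and "((\<lambda>t. u (x, t)) has_real_derivative pd 2 u (x, y)) (at y)"
proof -
  obtain D where "(u has_derivative D) (at (x, y))"
    using assms by (auto simp: differentiable_def)
  then show "((\<lambda>t. u (t, y)) has_real_derivative pd 1 u (x, y)) (at x)"
    and "((\<lambda>t. u (x, t)) has_real_derivative pd 2 u (x, y)) (at y)"
    using has_derivative_partial pd_eq_derivative by metis+
qed

lemma smooth2D:
  assumes "smooth2 u"
  shows "u differentiable (at p)" "smooth2 (pd 1 u)" "smooth2 (pd 2 u)"
  using assms by (auto elim: smooth2.cases)

lemma pd_const [simp]: "pd i (\<lambda>p. k) = (\<lambda>p. 0)"
  unfolding pd_def by (auto simp: fun_eq_iff)

(* poly_dx q and poly_dy q are the coefficient vectors of the partial derivatives of quad_poly q;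
   dx_coeffs z1 q and dy_coeffs z2 q are those of the polynomial factor of the partial derivatives of
   exp_poly z1 z2 q. *)

definition quad_poly :: "(nat \<Rightarrow> complex) \<Rightarrow> complex \<Rightarrow> complex \<Rightarrow> complex" where
  "quad_poly q x y = q 0 + q 1 * x + q 2 * y + q 3 * x\<^sup>2 + q 4 * x * y + q 5 * y\<^sup>2"

definition poly_dx :: "(nat \<Rightarrow> complex) \<Rightarrow> nat \<Rightarrow> complex" where
  "poly_dx q k = (if k = 0 then q 1 else if k = 1 then 2 * q 3 else if k = 2 then q 4 else 0)"

definition poly_dy :: "(nat \<Rightarrow> complex) \<Rightarrow> nat \<Rightarrow> complex" where
  "poly_dy q k = (if k = 0 then q 2 else if k = 1 then q 4 else if k = 2 then 2 * q 5 else 0)"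

definition exp_poly :: "complex \<Rightarrow> complex \<Rightarrow> (nat \<Rightarrow> complex) \<Rightarrow> real \<times> real \<Rightarrow> complex" where
  "exp_poly z1 z2 q = (\<lambda>(x, y). exp (z1 * of_real x + z2 * of_real y) * quad_poly q (of_real x) (of_real y))"

definition re_exp_poly :: "complex \<Rightarrow> complex \<Rightarrow> (nat \<Rightarrow> complex) \<Rightarrow> real \<times> real \<Rightarrow> real" where
  "re_exp_poly z1 z2 q = (\<lambda>p. Re (exp_poly z1 z2 q p))"

definition dx_coeffs :: "complex \<Rightarrow> (nat \<Rightarrow> complex) \<Rightarrow> nat \<Rightarrow> complex" where
  "dx_coeffs z1 q = (\<lambda>k. z1 * q k + poly_dx q k)"

definition dy_coeffs :: "complex \<Rightarrow> (nat \<Rightarrow> complex) \<Rightarrow> nat \<Rightarrow> complex" where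
  "dy_coeffs z2 q = (\<lambda>k. z2 * q k + poly_dy q k)"

lemma exp_linear_has_derivative:
  fixes z1 z2 :: complex
  shows
  "((\<lambda>p::real \<times> real. exp (z1 * of_real (fst p) + z2 * of_real (snd p))) has_derivative
     (\<lambda>h. exp (z1 * of_real (fst p) + z2 * of_real (snd p)) * (z1 * of_real (fst h) + z2 * of_real (snd h)))) (at p)"
proof -
  have "((\<lambda>p::real \<times> real. z1 * complex_of_real (fst p) + z2 * complex_of_real (snd p)) has_derivative
      (\<lambda>p. z1 * complex_of_real (fst p) + z2 * complex_of_real (snd p))) (at p)"
    by (auto intro!: derivative_eq_intros)
  from has_derivative_compose[OF this DERIV_exp[unfolded has_field_derivative_def]]
  show ?thesis by simp
qed

lemma quad_poly_dx_coeffs: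
  "quad_poly (dx_coeffs z1 q) x y = z1 * quad_poly q x y + (q 1 + 2 * q 3 * x + q 4 * y)"
  by (simp add: quad_poly_def dx_coeffs_def poly_dx_def algebra_simps)

lemma quad_poly_dy_coeffs:
  "quad_poly (dy_coeffs z2 q) x y = z2 * quad_poly q x y + (q 2 + q 4 * x + 2 * q 5 * y)"
  by (simp add: quad_poly_def dy_coeffs_def poly_dy_def algebra_simps)

lemma exp_poly_has_derivative:
  "(exp_poly z1 z2 q has_derivative (\<lambda>(h, k). of_real h * exp_poly z1 z2 (dx_coeffs z1 q) (x, y)
     + of_real k * exp_poly z1 z2 (dy_coeffs z2 q) (x, y))) (at (x, y))"
proof -
  have "((\<lambda>p. exp (z1 * of_real (fst p) + z2 * of_real (snd p)) * quad_poly q (of_real (fst p)) (of_real (snd p)))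
     has_derivative (\<lambda>(h, k). of_real h * exp_poly z1 z2 (dx_coeffs z1 q) (x, y)
       + of_real k * exp_poly z1 z2 (dy_coeffs z2 q) (x, y))) (at (x, y))"
    unfolding quad_poly_def
    apply (rule derivative_eq_intros exp_linear_has_derivative refl)+
    apply (simp add: fun_eq_iff exp_poly_def quad_poly_dx_coeffs quad_poly_dy_coeffs)
    apply (simp add: quad_poly_def algebra_simps power2_eq_square)
    done
  then show ?thesis by (simp add: exp_poly_def case_prod_beta')
qed

lemma re_exp_poly_has_derivative:
  "(re_exp_poly z1 z2 q has_derivative (\<lambda>(h, k). h * re_exp_poly z1 z2 (dx_coeffs z1 q) (x, y)
     + k * re_exp_poly z1 z2 (dy_coeffs z2 q) (x, y))) (at (x, y))"
  using has_derivative_Re[OF exp_poly_has_derivative, of z1 z2 q x y]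
  by (simp add: re_exp_poly_def case_prod_beta')

lemma re_exp_poly_differentiable: "re_exp_poly z1 z2 q differentiable (at p)"
  using re_exp_poly_has_derivative[of z1 z2 q "fst p" "snd p"] by (auto intro: differentiableI)

lemma pd_re_exp_poly:
  "pd 1 (re_exp_poly z1 z2 q) = re_exp_poly z1 z2 (dx_coeffs z1 q)"
  "pd 2 (re_exp_poly z1 z2 q) = re_exp_poly z1 z2 (dy_coeffs z2 q)"
  using pd_eq_derivative[OF re_exp_poly_has_derivative] by (simp_all add: fun_eq_iff split_paired_all)

lemma smooth2_re_exp_poly: "smooth2 (re_exp_poly z1 z2 q)"
proof -
  have "smooth2 u" if "\<exists>z1 z2 q. u = re_exp_poly z1 z2 q" for u
    using that
  proof (rule smooth2.coinduct)
    fix u assume "\<exists>z1 z2 q. u = re_exp_poly z1 z2 q"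
    then obtain z1 z2 q where u: "u = re_exp_poly z1 z2 q" by blast
    show "\<exists>u'. u = u' \<and> (\<forall>p. u' differentiable at p)
        \<and> ((\<exists>z1 z2 q. pd 1 u' = re_exp_poly z1 z2 q) \<or> smooth2 (pd 1 u'))
        \<and> ((\<exists>z1 z2 q. pd 2 u' = re_exp_poly z1 z2 q) \<or> smooth2 (pd 2 u'))"
      unfolding u using re_exp_poly_differentiable
      by (intro exI[of _ "re_exp_poly z1 z2 q"]) (auto simp: pd_re_exp_poly)
  qed
  then show ?thesis by blast
qed

lemma dx_dy_coeffs_commute: "dx_coeffs z1 (dy_coeffs z2 q) = dy_coeffs z2 (dx_coeffs z1 q)"
  by (auto simp: fun_eq_iff dx_coeffs_def dy_coeffs_def poly_dx_def poly_dy_def algebra_simps)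

lemma quad_poly_lincomb:
  "quad_poly (\<lambda>k. s1 * q1 k + s2 * q2 k - s0 * q0 k) x y
    = s1 * quad_poly q1 x y + s2 * quad_poly q2 x y - s0 * quad_poly q0 x y"
  by (simp add: quad_poly_def algebra_simps)

lemma re_exp_poly_lincomb_zero:
  assumes "\<forall>k. q k - of_real \<alpha> * q1 k - of_real \<beta> * q2 k + of_real \<gamma> * q0 k = 0"
  shows "re_exp_poly z1 z2 q p - (\<alpha> * re_exp_poly z1 z2 q1 p + \<beta> * re_exp_poly z1 z2 q2 p)
    + re_exp_poly z1 z2 q0 p * \<gamma> = 0"
proof -
  have "q = (\<lambda>k. of_real \<alpha> * q1 k + of_real \<beta> * q2 k - of_real \<gamma> * q0 k)"
    using assms by (auto simp: fun_eq_iff algebra_simps)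
  then have "exp_poly z1 z2 q p
      = of_real \<alpha> * exp_poly z1 z2 q1 p + of_real \<beta> * exp_poly z1 z2 q2 p - of_real \<gamma> * exp_poly z1 z2 q0 p"
    by (simp only: exp_poly_def case_prod_beta' quad_poly_lincomb) (simp add: algebra_simps)
  then show ?thesis by (simp add: re_exp_poly_def)
qed

subsection \<open>The quasi-Einstein equation of a Type A connection\<close>

definition rho11 :: "real \<Rightarrow> real \<Rightarrow> real \<Rightarrow> real \<Rightarrow> real \<Rightarrow> real \<Rightarrow> real" where
  "rho11 a b c d e f = a * d + b * f - b * c - d\<^sup>2"

definition rho12 :: "real \<Rightarrow> real \<Rightarrow> real \<Rightarrow> real \<Rightarrow> real \<Rightarrow> real \<Rightarrow> real" where
  "rho12 a b c d e f = c * d - b * e"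

definition rho22 :: "real \<Rightarrow> real \<Rightarrow> real \<Rightarrow> real \<Rightarrow> real \<Rightarrow> real \<Rightarrow> real" where
  "rho22 a b c d e f = a * e + c * f - c\<^sup>2 - d * e"

lemma sum_idx: "(\<Sum>k\<in>idx. g k) = g 1 + (g 2 :: real)"
  by (simp add: idx_def)

lemma GammaA_simps [simp]:
  "GammaA a b c d e f 1 1 1 p = a" "GammaA a b c d e f 1 1 2 p = b"
  "GammaA a b c d e f 1 2 1 p = c" "GammaA a b c d e f 1 2 2 p = d"
  "GammaA a b c d e f 2 1 1 p = c" "GammaA a b c d e f 2 1 2 p = d"
  "GammaA a b c d e f 2 2 1 p = e" "GammaA a b c d e f 2 2 2 p = f"
  by (simp_all add: GammaA_def)

lemma ricci_s_GammaA:
  "ricci_s (GammaA a b c d e f) 1 1 p = rho11 a b c d e f"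
  "ricci_s (GammaA a b c d e f) 1 2 p = rho12 a b c d e f"
  "ricci_s (GammaA a b c d e f) 2 1 p = rho12 a b c d e f"
  "ricci_s (GammaA a b c d e f) 2 2 p = rho22 a b c d e f"
  unfolding ricci_s_def ricci_def curv_def sum_idx GammaA_def pd_const rho11_def rho12_def rho22_def
  by (simp_all add: power2_eq_square field_simps)

lemma QE_GammaA_iff:
  "u \<in> QE (GammaA a b c d e f) \<longleftrightarrow> smooth2 u \<and> (\<forall>p.
     pd 1 (pd 1 u) p - (a * pd 1 u p + b * pd 2 u p) + u p * rho11 a b c d e f = 0 \<and>
     pd 1 (pd 2 u) p - (c * pd 1 u p + d * pd 2 u p) + u p * rho12 a b c d e f = 0 \<and>
     pd 2 (pd 1 u) p - (c * pd 1 u p + d * pd 2 u p) + u p * rho12 a b c d e f = 0 \<and>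
     pd 2 (pd 2 u) p - (e * pd 1 u p + f * pd 2 u p) + u p * rho22 a b c d e f = 0)"
  unfolding QE_def hess_def
  by (auto simp: sum_idx idx_def ricci_s_GammaA)

lemma re_exp_poly_in_QE:
  assumes "\<forall>k. dx_coeffs z1 (dx_coeffs z1 q) k - of_real a * dx_coeffs z1 q k - of_real b * dy_coeffs z2 q k
      + of_real (rho11 a b c d e f) * q k = 0"
    and "\<forall>k. dx_coeffs z1 (dy_coeffs z2 q) k - of_real c * dx_coeffs z1 q k - of_real d * dy_coeffs z2 q k
      + of_real (rho12 a b c d e f) * q k = 0"
    and "\<forall>k. dy_coeffs z2 (dy_coeffs z2 q) k - of_real e * dx_coeffs z1 q k - of_real f * dy_coeffs z2 q k
      + of_real (rho22 a b c d e f) * q k = 0"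
  shows "re_exp_poly z1 z2 q \<in> QE (GammaA a b c d e f)"
  unfolding QE_GammaA_iff pd_re_exp_poly
  using assms(1,2) assms(2)[unfolded dx_dy_coeffs_commute] assms(3)
  by (intro conjI allI smooth2_re_exp_poly re_exp_poly_lincomb_zero) blast+

subsection \<open>Exponential polynomial solutions\<close>

(* With P = 2d - a and R = 2c - f, a function exp_poly (X + d) (Y + c) q solves the equation of
   GammaA a b c d e f when (X, Y) is a char_point and q satisfies char_poly_eqs. *)

definition char_point :: "'a::comm_ring_1 \<Rightarrow> 'a \<Rightarrow> 'a \<Rightarrow> 'a \<Rightarrow> 'a \<Rightarrow> 'a \<Rightarrow> bool" where
  "char_point P R b e X Y \<longleftrightarrow>
     X * (X + P) = b * (Y + R) \<and> X * Y = b * e \<and> Y * (Y + R) = e * (X + P)"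

definition char_tangent :: "'a::comm_ring_1 \<Rightarrow> 'a \<Rightarrow> 'a \<Rightarrow> 'a \<Rightarrow> 'a \<Rightarrow> 'a \<Rightarrow> 'a \<Rightarrow> 'a \<Rightarrow> bool" where
  "char_tangent P R b e X Y v1 v2 \<longleftrightarrow>
     (2 * X + P) * v1 - b * v2 = 0 \<and> Y * v1 + X * v2 = 0 \<and> - e * v1 + (2 * Y + R) * v2 = 0"

definition char_second_order ::
    "'a::comm_ring_1 \<Rightarrow> 'a \<Rightarrow> 'a \<Rightarrow> 'a \<Rightarrow> 'a \<Rightarrow> 'a \<Rightarrow> 'a \<Rightarrow> 'a \<Rightarrow> 'a \<Rightarrow> 'a \<Rightarrow> bool" where
  "char_second_order P R b e X Y v1 v2 w1 w2 \<longleftrightarrow>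
     (2 * X + P) * w1 - b * w2 + 2 * v1\<^sup>2 = 0 \<and> Y * w1 + X * w2 + 2 * v1 * v2 = 0
     \<and> - e * w1 + (2 * Y + R) * w2 + 2 * v2\<^sup>2 = 0"

definition char_poly_eqs ::
    "complex \<Rightarrow> complex \<Rightarrow> complex \<Rightarrow> complex \<Rightarrow> complex \<Rightarrow> complex \<Rightarrow> (nat \<Rightarrow> complex) \<Rightarrow> bool" where
  "char_poly_eqs P R b e X Y q \<longleftrightarrow> (\<forall>k.
     (2 * X + P) * poly_dx q k - b * poly_dy q k + poly_dx (poly_dx q) k = 0 \<and>
     Y * poly_dx q k + X * poly_dy q k + poly_dx (poly_dy q) k = 0 \<and>
     - e * poly_dx q k + (2 * Y + R) * poly_dy q k + poly_dy (poly_dy q) k = 0)"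

lemma poly_dx_linear: "poly_dx (\<lambda>k. z * q k + r k) = (\<lambda>k. z * poly_dx q k + poly_dx r k)"
  by (auto simp: fun_eq_iff poly_dx_def algebra_simps)

lemma poly_dy_linear: "poly_dy (\<lambda>k. z * q k + r k) = (\<lambda>k. z * poly_dy q k + poly_dy r k)"
  by (auto simp: fun_eq_iff poly_dy_def algebra_simps)

lemma re_exp_poly_in_QE_GammaA:
  fixes a b c d e f :: real
  defines "P \<equiv> complex_of_real (2 * d - a)" and "R \<equiv> complex_of_real (2 * c - f)"
    and "B \<equiv> complex_of_real b" and "E \<equiv> complex_of_real e"
  assumes "char_point P R B E X Y" and "char_poly_eqs P R B E X Y q"
  shows "re_exp_poly (X + of_real d) (Y + of_real c) q \<in> QE (GammaA a b c d e f)"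
proof (rule re_exp_poly_in_QE; intro allI)
  fix k
  have ch: "X * (X + P) - B * (Y + R) = 0" "X * Y - B * E = 0" "Y * (Y + R) - E * (X + P) = 0"
    using assms(5) by (simp_all add: char_point_def)
  have eq: "(2 * X + P) * poly_dx q k - B * poly_dy q k + poly_dx (poly_dx q) k = 0"
    "Y * poly_dx q k + X * poly_dy q k + poly_dx (poly_dy q) k = 0"
    "- E * poly_dx q k + (2 * Y + R) * poly_dy q k + poly_dy (poly_dy q) k = 0"
    using assms(6) by (simp_all add: char_poly_eqs_def)
  note expand = P_def R_def B_def E_def
    rho11_def rho12_def rho22_def algebra_simps power2_eq_square
  have "dx_coeffs (X + of_real d) (dx_coeffs (X + of_real d) q) k - of_real a * dx_coeffs (X + of_real d) q k
      - of_real b * dy_coeffs (Y + of_real c) q k + of_real (rho11 a b c d e f) * q k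
    = (X * (X + P) - B * (Y + R)) * q k
      + ((2 * X + P) * poly_dx q k - B * poly_dy q k + poly_dx (poly_dx q) k)"
    by (simp only: dx_coeffs_def dy_coeffs_def poly_dx_linear poly_dy_linear) (simp add: expand)
  then show "dx_coeffs (X + of_real d) (dx_coeffs (X + of_real d) q) k - of_real a * dx_coeffs (X + of_real d) q k
      - of_real b * dy_coeffs (Y + of_real c) q k + of_real (rho11 a b c d e f) * q k = 0"
    using ch eq by simp
  have "dx_coeffs (X + of_real d) (dy_coeffs (Y + of_real c) q) k - of_real c * dx_coeffs (X + of_real d) q k
      - of_real d * dy_coeffs (Y + of_real c) q k + of_real (rho12 a b c d e f) * q k
    = (X * Y - B * E) * q k + (Y * poly_dx q k + X * poly_dy q k + poly_dx (poly_dy q) k)"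
    by (simp only: dx_coeffs_def dy_coeffs_def poly_dx_linear poly_dy_linear) (simp add: expand)
  then show "dx_coeffs (X + of_real d) (dy_coeffs (Y + of_real c) q) k - of_real c * dx_coeffs (X + of_real d) q k
      - of_real d * dy_coeffs (Y + of_real c) q k + of_real (rho12 a b c d e f) * q k = 0"
    using ch eq by simp
  have "dy_coeffs (Y + of_real c) (dy_coeffs (Y + of_real c) q) k - of_real e * dx_coeffs (X + of_real d) q k
      - of_real f * dy_coeffs (Y + of_real c) q k + of_real (rho22 a b c d e f) * q k
    = (Y * (Y + R) - E * (X + P)) * q k
      + (- E * poly_dx q k + (2 * Y + R) * poly_dy q k + poly_dy (poly_dy q) k)"
    by (simp only: dx_coeffs_def dy_coeffs_def poly_dx_linear poly_dy_linear) (simp add: expand)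
  then show "dy_coeffs (Y + of_real c) (dy_coeffs (Y + of_real c) q) k - of_real e * dx_coeffs (X + of_real d) q k
      - of_real f * dy_coeffs (Y + of_real c) q k + of_real (rho22 a b c d e f) * q k = 0"
    using ch eq by simp
qed

definition const_coeffs :: "complex \<Rightarrow> nat \<Rightarrow> complex" where
  "const_coeffs s = (\<lambda>k. if k = 0 then s else 0)"

definition lin_coeffs :: "complex \<Rightarrow> complex \<Rightarrow> nat \<Rightarrow> complex" where
  "lin_coeffs v1 v2 = (\<lambda>k. if k = 1 then v1 else if k = 2 then v2 else 0)"

definition quad_coeffs :: "complex \<Rightarrow> complex \<Rightarrow> complex \<Rightarrow> complex \<Rightarrow> nat \<Rightarrow> complex" where
  "quad_coeffs v1 v2 w1 w2 = (\<lambda>k. if k = 1 then w1 else if k = 2 then w2 else if k = 3 then v1\<^sup>2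
     else if k = 4 then 2 * v1 * v2 else if k = 5 then v2\<^sup>2 else 0)"

lemma char_poly_eqs_const: "char_poly_eqs P R b e X Y (const_coeffs s)"
  by (simp add: char_poly_eqs_def poly_dx_def poly_dy_def const_coeffs_def)

lemma char_poly_eqs_lin:
  assumes "char_tangent P R b e X Y v1 v2"
  shows "char_poly_eqs P R b e X Y (lin_coeffs v1 v2)"
  using assms by (simp add: char_poly_eqs_def char_tangent_def poly_dx_def poly_dy_def lin_coeffs_def)

lemma char_poly_eqs_quad:
  assumes "char_tangent P R b e X Y v1 v2" and "char_second_order P R b e X Y v1 v2 w1 w2"
  shows "char_poly_eqs P R b e X Y (quad_coeffs v1 v2 w1 w2)"
proof -
  have J: "2 * v * ((2 * X + P) * v1 - b * v2) = 0" "2 * v * (Y * v1 + X * v2) = 0"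
    "2 * v * (- e * v1 + (2 * Y + R) * v2) = 0" for v
    using assms(1) by (simp_all add: char_tangent_def)
  show ?thesis
    using assms(2) J[of v1] J[of v2]
    unfolding char_poly_eqs_def char_second_order_def
    by (auto simp: poly_dx_def poly_dy_def quad_coeffs_def algebra_simps power2_eq_square)
qed

lemma char_point_of_real:
  assumes "char_point P R b e X Y"
  shows "char_point (of_real P) (of_real R) (of_real b) (of_real e) (of_real X) (of_real Y :: complex)"
proof -
  have "of_real (X * (X + P)) = (of_real (b * (Y + R)) :: complex)" "of_real (X * Y) = (of_real (b * e) :: complex)"
    "of_real (Y * (Y + R)) = (of_real (e * (X + P)) :: complex)"
    using assms by (simp_all add: char_point_def)
  then show ?thesis by (simp add: char_point_def)
qed

lemma char_tangent_of_real:
  assumes "char_tangent P R b e X Y v1 v2"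
  shows "char_tangent (of_real P) (of_real R) (of_real b) (of_real e) (of_real X) (of_real Y)
    (of_real v1) (of_real v2 :: complex)"
proof -
  have "of_real ((2 * X + P) * v1 - b * v2) = (0 :: complex)" "of_real (Y * v1 + X * v2) = (0 :: complex)"
    "of_real (- e * v1 + (2 * Y + R) * v2) = (0 :: complex)"
    using assms by (simp_all add: char_tangent_def)
  then show ?thesis by (simp add: char_tangent_def)
qed

lemma char_second_order_of_real:
  assumes "char_second_order P R b e X Y v1 v2 w1 w2"
  shows "char_second_order (of_real P) (of_real R) (of_real b) (of_real e) (of_real X) (of_real Y)
    (of_real v1) (of_real v2) (of_real w1) (of_real w2 :: complex)"
proof -
  have "of_real ((2 * X + P) * w1 - b * w2 + 2 * v1\<^sup>2) = (0 :: complex)"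
    "of_real (Y * w1 + X * w2 + 2 * v1 * v2) = (0 :: complex)"
    "of_real (- e * w1 + (2 * Y + R) * w2 + 2 * v2\<^sup>2) = (0 :: complex)"
    using assms by (simp_all add: char_second_order_def)
  then show ?thesis by (simp add: char_second_order_def)
qed

subsection \<open>Solutions are determined by their 1-jet at the origin\<close>

(* Groenwall: E t * exp (- M * t) is nonincreasing for t \<ge> 0; negative t follow by reflection. *)
lemma DERIV_bounded_by_self_zero:
  fixes E E' :: "real \<Rightarrow> real"
  assumes deriv: "\<And>t. (E has_real_derivative E' t) (at t)"
    and bound: "\<And>t. \<bar>E' t\<bar> \<le> M * E t" and nonneg: "\<And>t. 0 \<le> E t" and zero: "E 0 = 0"
  shows "E t = 0"
proof -
  have forward: "F s = 0"
    if F: "\<And>t. (F has_real_derivative F' t) (at t)" "\<And>t. \<bar>F' t\<bar> \<le> M * F t" "\<And>t. 0 \<le> F t" "F 0 = 0"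
      and s: "0 \<le> s" for F F' :: "real \<Rightarrow> real" and s
  proof -
    have "F s * exp (- M * s) \<le> F 0 * exp (- M * 0)"
    proof (rule DERIV_nonpos_imp_nonincreasing[OF s])
      fix x
      have "((\<lambda>t. F t * exp (- M * t)) has_real_derivative (F' x - M * F x) * exp (- M * x)) (at x)"
        by (rule derivative_eq_intros F(1) refl | simp add: algebra_simps)+
      moreover have "(F' x - M * F x) * exp (- M * x) \<le> 0"
        using F(2)[of x] by (simp add: mult_nonpos_nonneg)
      ultimately show "\<exists>y. ((\<lambda>t. F t * exp (- M * t)) has_real_derivative y) (at x) \<and> y \<le> 0"
        by blast
    qed
    then have "F s \<le> 0"
      using F(4) by (simp add: mult_le_0_iff)
    then show ?thesis using F(3)[of s] by linarith
  qed
  show ?thesis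
  proof (cases "0 \<le> t")
    case True
    then show ?thesis by (rule forward[OF deriv bound nonneg zero])
  next
    case False
    have "E (- (- t)) = 0"
    proof (rule forward[where F = "\<lambda>s. E (- s)" and F' = "\<lambda>s. - E' (- s)"])
      show "((\<lambda>s. E (- s)) has_real_derivative - E' (- s)) (at s)" for s
        using deriv[of "- s"] by (simp add: DERIV_mirror)
    qed (use bound nonneg zero False in auto)
    then show ?thesis by simp
  qed
qed

lemma abs_lincomb3_le:
  fixes k1 k2 k3 p q r :: real
  shows "\<bar>k1 * p + k2 * q + k3 * r\<bar> \<le> (\<bar>k1\<bar> + \<bar>k2\<bar> + \<bar>k3\<bar>) * (\<bar>p\<bar> + \<bar>q\<bar> + \<bar>r\<bar>)"
proof -
  let ?S = "\<bar>p\<bar> + \<bar>q\<bar> + \<bar>r\<bar>"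
  have "\<bar>k1 * p + k2 * q + k3 * r\<bar> \<le> \<bar>k1\<bar> * \<bar>p\<bar> + \<bar>k2\<bar> * \<bar>q\<bar> + \<bar>k3\<bar> * \<bar>r\<bar>"
    using abs_triangle_ineq[of "k1 * p + k2 * q" "k3 * r"] abs_triangle_ineq[of "k1 * p" "k2 * q"]
    by (simp add: abs_mult)
  moreover have "\<bar>k1\<bar> * \<bar>p\<bar> \<le> \<bar>k1\<bar> * ?S" "\<bar>k2\<bar> * \<bar>q\<bar> \<le> \<bar>k2\<bar> * ?S" "\<bar>k3\<bar> * \<bar>r\<bar> \<le> \<bar>k3\<bar> * ?S"
    by (auto intro!: mult_left_mono)
  moreover have "(\<bar>k1\<bar> + \<bar>k2\<bar> + \<bar>k3\<bar>) * ?S = \<bar>k1\<bar> * ?S + \<bar>k2\<bar> * ?S + \<bar>k3\<bar> * ?S"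
    by (simp add: algebra_simps)
  ultimately show ?thesis by linarith
qed

lemma bounded_ode3_zero:
  fixes p q r p' q' r' :: "real \<Rightarrow> real"
  assumes dp: "\<And>t. (p has_real_derivative p' t) (at t)"
    and dq: "\<And>t. (q has_real_derivative q' t) (at t)"
    and dr: "\<And>t. (r has_real_derivative r' t) (at t)"
    and bound: "\<And>t. \<bar>p' t\<bar> + \<bar>q' t\<bar> + \<bar>r' t\<bar> \<le> K * (\<bar>p t\<bar> + \<bar>q t\<bar> + \<bar>r t\<bar>)"
    and zero: "p 0 = 0" "q 0 = 0" "r 0 = 0"
  shows "p t = 0 \<and> q t = 0 \<and> r t = 0"
proof -
  define E where "E t = (p t)\<^sup>2 + (q t)\<^sup>2 + (r t)\<^sup>2" for t
  define E' where "E' t = 2 * (p t * p' t + q t * q' t + r t * r' t)" for t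
  have "(E has_real_derivative E' t) (at t)" for t
    unfolding E_def[abs_def] E'_def
    by (rule derivative_eq_intros dp dq dr refl)+ (simp add: algebra_simps)
  moreover have "\<bar>E' t\<bar> \<le> 6 * \<bar>K\<bar> * E t" for t
  proof -
    let ?S = "\<bar>p t\<bar> + \<bar>q t\<bar> + \<bar>r t\<bar>"
    have "\<bar>E' t\<bar> \<le> 2 * (\<bar>p t\<bar> * \<bar>p' t\<bar> + \<bar>q t\<bar> * \<bar>q' t\<bar> + \<bar>r t\<bar> * \<bar>r' t\<bar>)"
      unfolding E'_def
      by (simp add: abs_mult[symmetric] abs_triangle_ineq order_trans[OF abs_triangle_ineq] add_mono)
    also have "\<dots> \<le> 2 * (?S * (\<bar>p' t\<bar> + \<bar>q' t\<bar> + \<bar>r' t\<bar>))"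
      by (simp add: algebra_simps)
    also have "\<dots> \<le> 2 * (?S * (K * ?S))"
      by (intro mult_left_mono bound) auto
    also have "\<dots> = 2 * (K * ?S\<^sup>2)"
      by (simp add: power2_eq_square algebra_simps)
    also have "\<dots> \<le> 2 * (\<bar>K\<bar> * ?S\<^sup>2)"
      by (intro mult_left_mono mult_right_mono) auto
    also have "\<dots> \<le> 2 * (\<bar>K\<bar> * (3 * E t))"
    proof (intro mult_left_mono)
      show "?S\<^sup>2 \<le> 3 * E t"
        using sum_squares_bound[of "\<bar>p t\<bar>" "\<bar>q t\<bar>"] sum_squares_bound[of "\<bar>q t\<bar>" "\<bar>r t\<bar>"]
          sum_squares_bound[of "\<bar>p t\<bar>" "\<bar>r t\<bar>"]
        by (simp add: E_def power2_eq_square algebra_simps)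
    qed simp_all
    finally show ?thesis by simp
  qed
  moreover have "0 \<le> E t" for t by (simp add: E_def)
  moreover have "E 0 = 0" by (simp add: E_def zero)
  ultimately have "E t = 0" by (rule DERIV_bounded_by_self_zero)
  then show ?thesis by (simp add: E_def add_nonneg_eq_0_iff)
qed

(* (w, wx, wy) stands for (u, pd 1 u, pd 2 u). Only derivatives along coordinate lines occur, so
   the system is closed under linear combinations without any smoothness bookkeeping. *)

definition qe_system :: "real \<Rightarrow> real \<Rightarrow> real \<Rightarrow> real \<Rightarrow> real \<Rightarrow> real
    \<Rightarrow> (real \<times> real \<Rightarrow> real) \<Rightarrow> (real \<times> real \<Rightarrow> real) \<Rightarrow> (real \<times> real \<Rightarrow> real) \<Rightarrow> bool" where
  "qe_system a b c d e f w wx wy \<longleftrightarrow> (\<forall>x y.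
     ((\<lambda>t. w (t, y)) has_real_derivative wx (x, y)) (at x) \<and>
     ((\<lambda>t. wx (t, y)) has_real_derivative a * wx (x, y) + b * wy (x, y) - rho11 a b c d e f * w (x, y)) (at x) \<and>
     ((\<lambda>t. wy (t, y)) has_real_derivative c * wx (x, y) + d * wy (x, y) - rho12 a b c d e f * w (x, y)) (at x) \<and>
     ((\<lambda>t. w (x, t)) has_real_derivative wy (x, y)) (at y) \<and>
     ((\<lambda>t. wx (x, t)) has_real_derivative c * wx (x, y) + d * wy (x, y) - rho12 a b c d e f * w (x, y)) (at y) \<and>
     ((\<lambda>t. wy (x, t)) has_real_derivative e * wx (x, y) + f * wy (x, y) - rho22 a b c d e f * w (x, y)) (at y))"

lemma QE_GammaA_imp_qe_system:
  assumes "u \<in> QE (GammaA a b c d e f)"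
  shows "qe_system a b c d e f u (pd 1 u) (pd 2 u)"
proof -
  note qe = assms[unfolded QE_GammaA_iff]
  have sm: "smooth2 u" using qe by (rule conjunct1)
  have eq: "pd 1 (pd 1 u) p = a * pd 1 u p + b * pd 2 u p - rho11 a b c d e f * u p"
      "pd 1 (pd 2 u) p = c * pd 1 u p + d * pd 2 u p - rho12 a b c d e f * u p"
      "pd 2 (pd 1 u) p = c * pd 1 u p + d * pd 2 u p - rho12 a b c d e f * u p"
      "pd 2 (pd 2 u) p = e * pd 1 u p + f * pd 2 u p - rho22 a b c d e f * u p" for p
    using conjunct2[OF qe, rule_format, of p] by (auto simp: algebra_simps)
  have diff: "u differentiable (at p)" "pd 1 u differentiable (at p)" "pd 2 u differentiable (at p)" for p
    by (rule smooth2D(1)[OF sm] smooth2D(1)[OF smooth2D(2)[OF sm]] smooth2D(1)[OF smooth2D(3)[OF sm]])+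
  show ?thesis
    unfolding qe_system_def
    using differentiable_partials[OF diff(1)] differentiable_partials[OF diff(2)]
      differentiable_partials[OF diff(3)] by (simp add: eq)
qed

lemma DERIV_lincomb:
  assumes "(f has_real_derivative f') (at x)" and "(g has_real_derivative g') (at x)"
    and "v = k1 * f' + k2 * g'"
  shows "((\<lambda>t. k1 * f t + k2 * g t) has_real_derivative v) (at x)"
  using DERIV_add[OF DERIV_cmult[OF assms(1)] DERIV_cmult[OF assms(2)]] assms(3) by simp

lemma qe_system_lincomb:
  assumes "qe_system a b c d e f w1 wx1 wy1" and "qe_system a b c d e f w2 wx2 wy2"
  shows "qe_system a b c d e f (\<lambda>p. k1 * w1 p + k2 * w2 p) (\<lambda>p. k1 * wx1 p + k2 * wx2 p)
    (\<lambda>p. k1 * wy1 p + k2 * wy2 p)"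
  unfolding qe_system_def
proof (intro allI)
  fix x y
  from assms[unfolded qe_system_def, rule_format, where x = x and y = y]
  show "((\<lambda>t. k1 * w1 (t, y) + k2 * w2 (t, y)) has_real_derivative k1 * wx1 (x, y) + k2 * wx2 (x, y)) (at x) \<and>
    ((\<lambda>t. k1 * wx1 (t, y) + k2 * wx2 (t, y)) has_real_derivative
     a * (k1 * wx1 (x, y) + k2 * wx2 (x, y)) + b * (k1 * wy1 (x, y) + k2 * wy2 (x, y)) -
     rho11 a b c d e f * (k1 * w1 (x, y) + k2 * w2 (x, y))) (at x) \<and>
    ((\<lambda>t. k1 * wy1 (t, y) + k2 * wy2 (t, y)) has_real_derivative
     c * (k1 * wx1 (x, y) + k2 * wx2 (x, y)) + d * (k1 * wy1 (x, y) + k2 * wy2 (x, y)) -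
     rho12 a b c d e f * (k1 * w1 (x, y) + k2 * w2 (x, y))) (at x) \<and>
    ((\<lambda>t. k1 * w1 (x, t) + k2 * w2 (x, t)) has_real_derivative k1 * wy1 (x, y) + k2 * wy2 (x, y)) (at y) \<and>
    ((\<lambda>t. k1 * wx1 (x, t) + k2 * wx2 (x, t)) has_real_derivative
     c * (k1 * wx1 (x, y) + k2 * wx2 (x, y)) + d * (k1 * wy1 (x, y) + k2 * wy2 (x, y)) -
     rho12 a b c d e f * (k1 * w1 (x, y) + k2 * w2 (x, y))) (at y) \<and>
    ((\<lambda>t. k1 * wy1 (x, t) + k2 * wy2 (x, t)) has_real_derivative
     e * (k1 * wx1 (x, y) + k2 * wx2 (x, y)) + f * (k1 * wy1 (x, y) + k2 * wy2 (x, y)) -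
     rho22 a b c d e f * (k1 * w1 (x, y) + k2 * w2 (x, y))) (at y)"
    apply (elim conjE)
    apply (intro conjI)
    apply (rule DERIV_lincomb, assumption, assumption, simp add: algebra_simps)+
    done
qed

lemma abs_rows_le:
  fixes V W X Y :: real
  assumes "V = X \<or> V = Y"
  shows "\<bar>V\<bar> + \<bar>k1 * X + k2 * Y - k3 * W\<bar> + \<bar>l1 * X + l2 * Y - l3 * W\<bar>
    \<le> (1 + \<bar>k1\<bar> + \<bar>k2\<bar> + \<bar>k3\<bar> + \<bar>l1\<bar> + \<bar>l2\<bar> + \<bar>l3\<bar>) * (\<bar>W\<bar> + \<bar>X\<bar> + \<bar>Y\<bar>)"
proof -
  let ?S = "\<bar>W\<bar> + \<bar>X\<bar> + \<bar>Y\<bar>"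
  have "\<bar>k1 * X + k2 * Y - k3 * W\<bar> \<le> (\<bar>k3\<bar> + \<bar>k1\<bar> + \<bar>k2\<bar>) * ?S"
    "\<bar>l1 * X + l2 * Y - l3 * W\<bar> \<le> (\<bar>l3\<bar> + \<bar>l1\<bar> + \<bar>l2\<bar>) * ?S"
    using abs_lincomb3_le[of "- k3" W k1 X k2 Y] abs_lincomb3_le[of "- l3" W l1 X l2 Y]
    by (simp_all add: algebra_simps)
  moreover have "\<bar>V\<bar> \<le> ?S" using assms by auto
  moreover have "(1 + \<bar>k1\<bar> + \<bar>k2\<bar> + \<bar>k3\<bar> + \<bar>l1\<bar> + \<bar>l2\<bar> + \<bar>l3\<bar>) * ?S
      = ?S + (\<bar>k3\<bar> + \<bar>k1\<bar> + \<bar>k2\<bar>) * ?S + (\<bar>l3\<bar> + \<bar>l1\<bar> + \<bar>l2\<bar>) * ?S"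
    by (simp add: algebra_simps)
  ultimately show ?thesis by linarith
qed

lemma qe_system_zero:
  assumes S: "qe_system a b c d e f w wx wy"
    and zero: "w (0, 0) = 0" "wx (0, 0) = 0" "wy (0, 0) = 0"
  shows "w (x, y) = 0"
proof -
  define r11 r12 r22 where "r11 = rho11 a b c d e f" and "r12 = rho12 a b c d e f" and "r22 = rho22 a b c d e f"
  note S' = S[unfolded qe_system_def r11_def[symmetric] r12_def[symmetric] r22_def[symmetric], rule_format]
  have horizontal: "w (t, 0) = 0 \<and> wx (t, 0) = 0 \<and> wy (t, 0) = 0" for t
  proof (rule bounded_ode3_zero[where p = "\<lambda>s. w (s, 0)" and q = "\<lambda>s. wx (s, 0)" and r = "\<lambda>s. wy (s, 0)"])
    fix s
    show "((\<lambda>s. w (s, 0)) has_real_derivative wx (s, 0)) (at s)"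
      "((\<lambda>s. wx (s, 0)) has_real_derivative a * wx (s, 0) + b * wy (s, 0) - r11 * w (s, 0)) (at s)"
      "((\<lambda>s. wy (s, 0)) has_real_derivative c * wx (s, 0) + d * wy (s, 0) - r12 * w (s, 0)) (at s)"
      using S' by blast+
    show "\<bar>wx (s, 0)\<bar> + \<bar>a * wx (s, 0) + b * wy (s, 0) - r11 * w (s, 0)\<bar>
        + \<bar>c * wx (s, 0) + d * wy (s, 0) - r12 * w (s, 0)\<bar>
      \<le> (1 + \<bar>a\<bar> + \<bar>b\<bar> + \<bar>r11\<bar> + \<bar>c\<bar> + \<bar>d\<bar> + \<bar>r12\<bar>) * (\<bar>w (s, 0)\<bar> + \<bar>wx (s, 0)\<bar> + \<bar>wy (s, 0)\<bar>)"
      by (rule abs_rows_le) simp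
  qed (use zero in simp_all)
  have "w (x, t) = 0 \<and> wx (x, t) = 0 \<and> wy (x, t) = 0" for t
  proof (rule bounded_ode3_zero[where p = "\<lambda>s. w (x, s)" and q = "\<lambda>s. wx (x, s)" and r = "\<lambda>s. wy (x, s)"])
    fix s
    show "((\<lambda>s. w (x, s)) has_real_derivative wy (x, s)) (at s)"
      "((\<lambda>s. wx (x, s)) has_real_derivative c * wx (x, s) + d * wy (x, s) - r12 * w (x, s)) (at s)"
      "((\<lambda>s. wy (x, s)) has_real_derivative e * wx (x, s) + f * wy (x, s) - r22 * w (x, s)) (at s)"
      using S' by blast+
    show "\<bar>wy (x, s)\<bar> + \<bar>c * wx (x, s) + d * wy (x, s) - r12 * w (x, s)\<bar>
        + \<bar>e * wx (x, s) + f * wy (x, s) - r22 * w (x, s)\<bar>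
      \<le> (1 + \<bar>c\<bar> + \<bar>d\<bar> + \<bar>r12\<bar> + \<bar>e\<bar> + \<bar>f\<bar> + \<bar>r22\<bar>) * (\<bar>w (x, s)\<bar> + \<bar>wx (x, s)\<bar> + \<bar>wy (x, s)\<bar>)"
      by (rule abs_rows_le) simp
  qed (use horizontal in simp_all)
  then show ?thesis by simp
qed

lemma qe_system_deriv0:
  assumes "qe_system a b c d e f w wx wy" and "\<And>p. w p = 0"
  shows "wx (0, 0) = 0" "wy (0, 0) = 0"
proof -
  have "((\<lambda>t. w (t, 0)) has_real_derivative wx (0, 0)) (at 0)"
    "((\<lambda>t. w (0, t)) has_real_derivative wy (0, 0)) (at 0)"
    using assms(1) unfolding qe_system_def by blast+
  moreover have "((\<lambda>t. w (t, 0)) has_real_derivative 0) (at 0)" "((\<lambda>t. w (0, t)) has_real_derivative 0) (at 0)"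
    using assms(2) by simp_all
  ultimately show "wx (0, 0) = 0" "wy (0, 0) = 0"
    using DERIV_unique by blast+
qed

subsection \<open>A basis of the solution space\<close>

definition det3 :: "real \<Rightarrow> real \<Rightarrow> real \<Rightarrow> real \<Rightarrow> real \<Rightarrow> real \<Rightarrow> real \<Rightarrow> real \<Rightarrow> real \<Rightarrow> real" where
  "det3 A1 B1 C1 A2 B2 C2 A3 B3 C3 = A1 * (B2 * C3 - B3 * C2) - B1 * (A2 * C3 - A3 * C2) + C1 * (A2 * B3 - A3 * B2)"

lemma det3_nonzero_imp_indep:
  assumes "det3 A1 B1 C1 A2 B2 C2 A3 B3 C3 \<noteq> 0"
    and "k1 * A1 + k2 * A2 + k3 * A3 = 0" "k1 * B1 + k2 * B2 + k3 * B3 = 0" "k1 * C1 + k2 * C2 + k3 * C3 = 0"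
  shows "k1 = 0 \<and> k2 = 0 \<and> k3 = 0"
proof -
  let ?d = "det3 A1 B1 C1 A2 B2 C2 A3 B3 C3"
  have "k1 * ?d = (B2 * C3 - B3 * C2) * (k1 * A1 + k2 * A2 + k3 * A3) - (A2 * C3 - A3 * C2) * (k1 * B1 + k2 * B2 + k3 * B3)
     + (A2 * B3 - A3 * B2) * (k1 * C1 + k2 * C2 + k3 * C3)"
    "k2 * ?d = - (B1 * C3 - B3 * C1) * (k1 * A1 + k2 * A2 + k3 * A3) + (A1 * C3 - A3 * C1) * (k1 * B1 + k2 * B2 + k3 * B3)
     - (A1 * B3 - A3 * B1) * (k1 * C1 + k2 * C2 + k3 * C3)"
    "k3 * ?d = (B1 * C2 - B2 * C1) * (k1 * A1 + k2 * A2 + k3 * A3) - (A1 * C2 - A2 * C1) * (k1 * B1 + k2 * B2 + k3 * B3)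
     + (A1 * B2 - A2 * B1) * (k1 * C1 + k2 * C2 + k3 * C3)"
    unfolding det3_def by (simp_all add: algebra_simps)
  then show ?thesis using assms by auto
qed

lemma det3_nonzero_imp_solvable:
  assumes d: "det3 A1 B1 C1 A2 B2 C2 A3 B3 C3 \<noteq> 0"
  shows "\<exists>k1 k2 k3. k1 * A1 + k2 * A2 + k3 * A3 = t1 \<and> k1 * B1 + k2 * B2 + k3 * B3 = t2
    \<and> k1 * C1 + k2 * C2 + k3 * C3 = t3"
proof -
  let ?d = "det3 A1 B1 C1 A2 B2 C2 A3 B3 C3"
  let ?k1 = "((B2 * C3 - B3 * C2) * t1 - (A2 * C3 - A3 * C2) * t2 + (A2 * B3 - A3 * B2) * t3) / ?d"
  let ?k2 = "(- (B1 * C3 - B3 * C1) * t1 + (A1 * C3 - A3 * C1) * t2 - (A1 * B3 - A3 * B1) * t3) / ?d"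
  let ?k3 = "((B1 * C2 - B2 * C1) * t1 - (A1 * C2 - A2 * C1) * t2 + (A1 * B2 - A2 * B1) * t3) / ?d"
  have "?k1 * A1 + ?k2 * A2 + ?k3 * A3 = t1" "?k1 * B1 + ?k2 * B2 + ?k3 * B3 = t2"
    "?k1 * C1 + ?k2 * C2 + ?k3 * C3 = t3"
    using d by (simp_all add: field_simps) (simp_all add: det3_def algebra_simps)
  then show ?thesis by blast
qed

definition jet_det :: "(real \<times> real \<Rightarrow> real) \<Rightarrow> (real \<times> real \<Rightarrow> real) \<Rightarrow> (real \<times> real \<Rightarrow> real) \<Rightarrow> real" where
  "jet_det f1 f2 f3 = det3 (f1 (0, 0)) (pd 1 f1 (0, 0)) (pd 2 f1 (0, 0)) (f2 (0, 0)) (pd 1 f2 (0, 0)) (pd 2 f2 (0, 0))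
     (f3 (0, 0)) (pd 1 f3 (0, 0)) (pd 2 f3 (0, 0))"

context
  fixes a b c d e f :: real and f1 f2 f3 :: "real \<times> real \<Rightarrow> real"
  assumes sol: "f1 \<in> QE (GammaA a b c d e f)" "f2 \<in> QE (GammaA a b c d e f)" "f3 \<in> QE (GammaA a b c d e f)"
    and jet_det: "jet_det f1 f2 f3 \<noteq> 0"
begin

lemma QE_GammaA_span:
  assumes "u \<in> QE (GammaA a b c d e f)"
  shows "\<exists>k1 k2 k3. u = (\<lambda>p. k1 * f1 p + k2 * f2 p + k3 * f3 p)"
proof -
  note S = QE_GammaA_imp_qe_system[OF sol(1)] QE_GammaA_imp_qe_system[OF sol(2)]
    QE_GammaA_imp_qe_system[OF sol(3)] QE_GammaA_imp_qe_system[OF assms]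
  obtain k1 k2 k3 where k: "k1 * f1 (0, 0) + k2 * f2 (0, 0) + k3 * f3 (0, 0) = u (0, 0)"
    "k1 * pd 1 f1 (0, 0) + k2 * pd 1 f2 (0, 0) + k3 * pd 1 f3 (0, 0) = pd 1 u (0, 0)"
    "k1 * pd 2 f1 (0, 0) + k2 * pd 2 f2 (0, 0) + k3 * pd 2 f3 (0, 0) = pd 2 u (0, 0)"
    using det3_nonzero_imp_solvable[OF jet_det[unfolded jet_det_def]] by blast
  note S12 = qe_system_lincomb[OF S(1) S(2), of k1 k2]
  note S123 = qe_system_lincomb[OF S12 S(3), of 1 k3]
  note diff = qe_system_lincomb[OF S(4) S123, of 1 "- 1"]
  have "u (x, y) - (k1 * f1 (x, y) + k2 * f2 (x, y) + k3 * f3 (x, y)) = 0" for x y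
    using qe_system_zero[OF diff, of x y] k by (simp add: algebra_simps)
  then show ?thesis by (auto simp: fun_eq_iff)
qed

lemma QE_GammaA_indep:
  assumes "\<And>p. k1 * f1 p + k2 * f2 p + k3 * f3 p = 0"
  shows "k1 = 0 \<and> k2 = 0 \<and> k3 = 0"
proof -
  note S = QE_GammaA_imp_qe_system[OF sol(1)] QE_GammaA_imp_qe_system[OF sol(2)]
    QE_GammaA_imp_qe_system[OF sol(3)]
  note S12 = qe_system_lincomb[OF S(1) S(2), of k1 k2]
  note comb = qe_system_lincomb[OF S12 S(3), of 1 k3]
  have "k1 * pd 1 f1 (0, 0) + k2 * pd 1 f2 (0, 0) + k3 * pd 1 f3 (0, 0) = 0"
    "k1 * pd 2 f1 (0, 0) + k2 * pd 2 f2 (0, 0) + k3 * pd 2 f3 (0, 0) = 0"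
    using qe_system_deriv0[OF comb] assms by simp_all
  moreover have "k1 * f1 (0, 0) + k2 * f2 (0, 0) + k3 * f3 (0, 0) = 0" by (rule assms)
  ultimately show ?thesis using det3_nonzero_imp_indep[OF jet_det[unfolded jet_det_def]] by blast
qed

lemma QEc_GammaA_span:
  assumes "u \<in> QEc (GammaA a b c d e f)"
  shows "\<exists>c1 c2 c3. u = (\<lambda>p. c1 * of_real (f1 p) + c2 * of_real (f2 p) + c3 * of_real (f3 p))"
proof -
  obtain g h where u: "u = (\<lambda>p. of_real (g p) + \<i> * of_real (h p))"
    and "g \<in> QE (GammaA a b c d e f)" "h \<in> QE (GammaA a b c d e f)"
    using assms unfolding QEc_def by blast
  then obtain k1 k2 k3 m1 m2 m3 where "g = (\<lambda>p. k1 * f1 p + k2 * f2 p + k3 * f3 p)"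
    "h = (\<lambda>p. m1 * f1 p + m2 * f2 p + m3 * f3 p)"
    using QE_GammaA_span by meson
  then have "u = (\<lambda>p. Complex k1 m1 * of_real (f1 p) + Complex k2 m2 * of_real (f2 p) + Complex k3 m3 * of_real (f3 p))"
    by (simp add: u fun_eq_iff complex_eq_iff)
  then show ?thesis by blast
qed

lemma QEc_GammaA_indep:
  fixes c1 c2 c3 :: complex
  assumes "\<And>p. c1 * of_real (f1 p) + c2 * of_real (f2 p) + c3 * of_real (f3 p) = 0"
  shows "c1 = 0 \<and> c2 = 0 \<and> c3 = 0"
proof -
  have "Re c1 = 0 \<and> Re c2 = 0 \<and> Re c3 = 0" "Im c1 = 0 \<and> Im c2 = 0 \<and> Im c3 = 0"
    using QE_GammaA_indep[of "Re c1" "Re c2" "Re c3"] QE_GammaA_indep[of "Im c1" "Im c2" "Im c3"]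
      arg_cong[OF assms, of Re] arg_cong[OF assms, of Im] by simp_all
  then show ?thesis by (simp add: complex_eq_iff)
qed
end

lemma fin_basis3I:
  fixes x1 x2 x3 :: "'x \<Rightarrow> 'k::field"
  assumes mem: "x1 \<in> S" "x2 \<in> S" "x3 \<in> S"
    and span: "\<And>u. u \<in> S \<Longrightarrow> \<exists>c1 c2 c3. u = (\<lambda>p. c1 * x1 p + c2 * x2 p + c3 * x3 p)"
    and indep: "\<And>c1 c2 c3. (\<And>p. c1 * x1 p + c2 * x2 p + c3 * x3 p = 0) \<Longrightarrow> c1 = 0 \<and> c2 = 0 \<and> c3 = 0"
  shows "fin_basis S {x1, x2, x3}"
proof -
  have "x1 \<noteq> x2" using indep[of 1 "- 1" 0] by auto
  moreover have "x1 \<noteq> x3" using indep[of 1 0 "- 1"] by auto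
  moreover have "x2 \<noteq> x3" using indep[of 0 1 "- 1"] by auto
  ultimately have sum: "(\<Sum>b\<in>{x1, x2, x3}. c b * b p) = c x1 * x1 p + c x2 * x2 p + c x3 * x3 p" for c p
    by (simp add: add.assoc)
  show ?thesis
    unfolding fin_basis_def
  proof (intro conjI ballI allI impI)
    fix u assume "u \<in> S"
    then obtain c1 c2 c3 where u: "u = (\<lambda>p. c1 * x1 p + c2 * x2 p + c3 * x3 p)" using span by blast
    define c where "c b = (if b = x1 then c1 else if b = x2 then c2 else c3)" for b
    have "u = (\<lambda>p. \<Sum>b\<in>{x1, x2, x3}. c b * b p)"
      using \<open>x1 \<noteq> x2\<close> \<open>x1 \<noteq> x3\<close> \<open>x2 \<noteq> x3\<close> by (simp add: u sum c_def)
    then show "\<exists>c. u = (\<lambda>p. \<Sum>b\<in>{x1, x2, x3}. c b * b p)" by blast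
  next
    fix c b assume z: "(\<lambda>p. \<Sum>b\<in>{x1, x2, x3}. c b * b p) = (\<lambda>p. 0)" and "b \<in> {x1, x2, x3}"
    have "c x1 = 0 \<and> c x2 = 0 \<and> c x3 = 0"
      using indep[of "c x1" "c x2" "c x3"] fun_cong[OF z] by (simp add: sum)
    then show "c b = 0" using \<open>b \<in> {x1, x2, x3}\<close> by auto
  qed (use mem in auto)
qed

lemma QE_GammaA_basis:
  assumes "f1 \<in> QE (GammaA a b c d e f)" "f2 \<in> QE (GammaA a b c d e f)" "f3 \<in> QE (GammaA a b c d e f)"
    and "jet_det f1 f2 f3 \<noteq> 0"
  shows "fin_basis (QE (GammaA a b c d e f)) {f1, f2, f3}"
  using assms by (intro fin_basis3I QE_GammaA_span QE_GammaA_indep) (auto simp: fun_eq_iff)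

lemma smooth2_const: "smooth2 (\<lambda>p. k)"
proof -
  have "smooth2 u" if "\<exists>k. u = (\<lambda>p. k)" for u :: "real \<times> real \<Rightarrow> real"
    using that
  proof (rule smooth2.coinduct)
    fix u :: "real \<times> real \<Rightarrow> real"
    assume "\<exists>k. u = (\<lambda>p. k)"
    then show "\<exists>u'. u = u' \<and> (\<forall>p. u' differentiable at p)
        \<and> ((\<exists>k. pd 1 u' = (\<lambda>p. k)) \<or> smooth2 (pd 1 u')) \<and> ((\<exists>k. pd 2 u' = (\<lambda>p. k)) \<or> smooth2 (pd 2 u'))"
      by auto
  qed
  then show ?thesis by blast
qed

lemma zero_in_QE: "(\<lambda>p. 0) \<in> QE G"
  by (simp add: QE_def hess_def smooth2_const)

lemma of_real_in_QEc: "g \<in> QE G \<Longrightarrow> (\<lambda>p. complex_of_real (g p)) \<in> QEc G"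
  unfolding QEc_def using zero_in_QE by force

lemma QEc_GammaA_basis_of_real:
  assumes "f1 \<in> QE (GammaA a b c d e f)" "f2 \<in> QE (GammaA a b c d e f)" "f3 \<in> QE (GammaA a b c d e f)"
    and "jet_det f1 f2 f3 \<noteq> 0"
  shows "fin_basis (QEc (GammaA a b c d e f))
    {\<lambda>p. complex_of_real (f1 p), \<lambda>p. complex_of_real (f2 p), \<lambda>p. complex_of_real (f3 p)}"
  using assms by (intro fin_basis3I of_real_in_QEc QEc_GammaA_span QEc_GammaA_indep) auto

lemma QEc_GammaA_basis_conj:
  assumes sol: "f1 \<in> QE (GammaA a b c d e f)" "f2 \<in> QE (GammaA a b c d e f)" "f3 \<in> QE (GammaA a b c d e f)"
    and jet_det: "jet_det f1 f2 f3 \<noteq> 0" and neg: "(\<lambda>p. - f2 p) \<in> QE (GammaA a b c d e f)"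
  shows "fin_basis (QEc (GammaA a b c d e f))
    {\<lambda>p. of_real (f1 p) + \<i> * of_real (f2 p), \<lambda>p. of_real (f1 p) - \<i> * of_real (f2 p), \<lambda>p. of_real (f3 p)}"
proof (rule fin_basis3I)
  show "(\<lambda>p. of_real (f1 p) + \<i> * of_real (f2 p)) \<in> QEc (GammaA a b c d e f)"
    "(\<lambda>p. of_real (f1 p) - \<i> * of_real (f2 p)) \<in> QEc (GammaA a b c d e f)"
    unfolding QEc_def using sol(1,2) neg by force+
  show "(\<lambda>p. complex_of_real (f3 p)) \<in> QEc (GammaA a b c d e f)"
    using sol(3) by (rule of_real_in_QEc)
next
  fix u assume "u \<in> QEc (GammaA a b c d e f)"
  then obtain c1 c2 c3 where u: "u = (\<lambda>p. c1 * of_real (f1 p) + c2 * of_real (f2 p) + c3 * of_real (f3 p))"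
    using QEc_GammaA_span[OF sol jet_det] by blast
  have "u = (\<lambda>p. (c1 - \<i> * c2) / 2 * (of_real (f1 p) + \<i> * of_real (f2 p))
      + (c1 + \<i> * c2) / 2 * (of_real (f1 p) - \<i> * of_real (f2 p)) + c3 * of_real (f3 p))"
    by (simp add: u fun_eq_iff field_simps)
  then show "\<exists>c1 c2 c3. u = (\<lambda>p. c1 * (of_real (f1 p) + \<i> * of_real (f2 p))
      + c2 * (of_real (f1 p) - \<i> * of_real (f2 p)) + c3 * of_real (f3 p))" by blast
next
  fix c1 c2 c3
  assume "\<And>p. c1 * (of_real (f1 p) + \<i> * of_real (f2 p)) + c2 * (of_real (f1 p) - \<i> * of_real (f2 p))
    + c3 * of_real (f3 p) = 0"
  then have "(c1 + c2) * of_real (f1 p) + \<i> * (c1 - c2) * of_real (f2 p) + c3 * of_real (f3 p) = 0" for p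
    by (simp add: algebra_simps)
  then have "c1 + c2 = 0 \<and> \<i> * (c1 - c2) = 0 \<and> c3 = 0"
    by (rule QEc_GammaA_indep[OF sol jet_det])
  then show "c1 = 0 \<and> c2 = 0 \<and> c3 = 0" by (auto simp: complex_eq_iff)
qed

definition exp_poly_basis :: "christoffel \<Rightarrow> bool" where
  "exp_poly_basis G \<longleftrightarrow> (\<exists>B. fin_basis (QEc G) B \<and>
     (\<forall>u\<in>B. \<exists>(\<alpha>1::complex) \<alpha>2 (p0::complex) p1 p2 p3 p4 p5.
        (\<lambda>(x, y). exp (\<alpha>1 * complex_of_real x + \<alpha>2 * complex_of_real y)) \<in> QEc G \<and>
        u = (\<lambda>(x, y). exp (\<alpha>1 * complex_of_real x + \<alpha>2 * complex_of_real y) *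
               (p0 + p1 * complex_of_real x + p2 * complex_of_real y + p3 * (complex_of_real x)\<^sup>2
                + p4 * complex_of_real x * complex_of_real y + p5 * (complex_of_real y)\<^sup>2))))"

definition real_normal_basis :: "christoffel \<Rightarrow> bool" where
  "real_normal_basis G \<longleftrightarrow> (\<exists>L1 L2 L3 Q B. real_linear_fn L1 \<and> real_linear_fn L2 \<and> real_linear_fn L3
     \<and> real_poly_deg2 Q \<and> fin_basis (QE G) B \<and>
     (B = {(\<lambda>p. exp (L1 p) * cos (L2 p)), (\<lambda>p. exp (L1 p) * sin (L2 p)), (\<lambda>p. exp (L3 p))}
    \<or> B = {(\<lambda>p. exp (L1 p)), (\<lambda>p. exp (L2 p)), (\<lambda>p. exp (L3 p))}
    \<or> B = {(\<lambda>p. exp (L1 p)), (\<lambda>p. L2 p * exp (L1 p)), (\<lambda>p. exp (L3 p))}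
    \<or> B = {(\<lambda>p. exp (L1 p)), (\<lambda>p. L2 p * exp (L1 p)), (\<lambda>p. Q p * exp (L1 p))}))"

lemma exp_poly_const_coeffs:
  "exp_poly z1 z2 (const_coeffs 1) = (\<lambda>(x, y). exp (z1 * of_real x + z2 * of_real y))"
  by (simp add: fun_eq_iff exp_poly_def quad_poly_def const_coeffs_def)

lemma exp_poly_basisI:
  assumes "fin_basis (QEc G) {exp_poly z1 w1 q1, exp_poly z2 w2 q2, exp_poly z3 w3 q3}"
    and "exp_poly z1 w1 (const_coeffs 1) \<in> QEc G" "exp_poly z2 w2 (const_coeffs 1) \<in> QEc G"
    "exp_poly z3 w3 (const_coeffs 1) \<in> QEc G"
  shows "exp_poly_basis G"
proof -
  have "\<exists>(\<alpha>1::complex) \<alpha>2 (p0::complex) p1 p2 p3 p4 p5.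
        (\<lambda>(x, y). exp (\<alpha>1 * complex_of_real x + \<alpha>2 * complex_of_real y)) \<in> QEc G \<and>
        exp_poly z w q = (\<lambda>(x, y). exp (\<alpha>1 * complex_of_real x + \<alpha>2 * complex_of_real y) *
               (p0 + p1 * complex_of_real x + p2 * complex_of_real y + p3 * (complex_of_real x)\<^sup>2
                + p4 * complex_of_real x * complex_of_real y + p5 * (complex_of_real y)\<^sup>2))"
    if "exp_poly z w (const_coeffs 1) \<in> QEc G" for z w q
    using that unfolding exp_poly_const_coeffs
    by (intro exI[of _ z] exI[of _ w] exI[of _ "q _"]) (simp add: exp_poly_def quad_poly_def)
  with assms show ?thesis
    unfolding exp_poly_basis_def by blast
qed

lemma exp_poly_const_re_im:
  "exp_poly z1 z2 (const_coeffs 1) = (\<lambda>p. of_real (re_exp_poly z1 z2 (const_coeffs 1) p)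
     + \<i> * of_real (re_exp_poly z1 z2 (const_coeffs (- \<i>)) p))"
  "exp_poly (cnj z1) (cnj z2) (const_coeffs 1) = (\<lambda>p. of_real (re_exp_poly z1 z2 (const_coeffs 1) p)
     - \<i> * of_real (re_exp_poly z1 z2 (const_coeffs (- \<i>)) p))"
proof -
  have "cos (- u - v) = cos (u + v)" "sin (- u - v) = - sin (u + v)" for u v :: real
    using cos_minus[of "u + v"] sin_minus[of "u + v"] by (simp_all add: algebra_simps)
  then show "exp_poly z1 z2 (const_coeffs 1) = (\<lambda>p. of_real (re_exp_poly z1 z2 (const_coeffs 1) p)
     + \<i> * of_real (re_exp_poly z1 z2 (const_coeffs (- \<i>)) p))"
    "exp_poly (cnj z1) (cnj z2) (const_coeffs 1) = (\<lambda>p. of_real (re_exp_poly z1 z2 (const_coeffs 1) p)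
     - \<i> * of_real (re_exp_poly z1 z2 (const_coeffs (- \<i>)) p))"
    by (auto simp: fun_eq_iff re_exp_poly_def exp_poly_def quad_poly_def const_coeffs_def complex_eq_iff
        Re_exp Im_exp)
qed

lemma re_exp_poly_const_uminus: "re_exp_poly z1 z2 (const_coeffs \<i>) = (\<lambda>p. - re_exp_poly z1 z2 (const_coeffs (- \<i>)) p)"
  by (simp add: fun_eq_iff re_exp_poly_def exp_poly_def quad_poly_def const_coeffs_def)

lemma exp_poly_real:
  assumes "Im z1 = 0" "Im z2 = 0" "\<And>k. Im (q k) = 0"
  shows "exp_poly z1 z2 q = (\<lambda>p. of_real (re_exp_poly z1 z2 q p))"
  using assms by (simp add: fun_eq_iff re_exp_poly_def exp_poly_def quad_poly_def complex_eq_iff Im_exp)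

lemma re_exp_poly_jet0:
  "re_exp_poly z1 z2 q (0, 0) = Re (q 0)"
  "pd 1 (re_exp_poly z1 z2 q) (0, 0) = Re (z1 * q 0 + q 1)"
  "pd 2 (re_exp_poly z1 z2 q) (0, 0) = Re (z2 * q 0 + q 2)"
  unfolding pd_re_exp_poly
  by (simp_all add: re_exp_poly_def exp_poly_def quad_poly_def dx_coeffs_def dy_coeffs_def poly_dx_def poly_dy_def)

definition lin2 :: "real \<Rightarrow> real \<Rightarrow> real \<times> real \<Rightarrow> real" where
  "lin2 \<alpha> \<beta> = (\<lambda>(x, y). \<alpha> * x + \<beta> * y)"

lemma real_linear_fn_lin2: "real_linear_fn (lin2 \<alpha> \<beta>)"
  unfolding real_linear_fn_def lin2_def by blast

lemma re_exp_poly_const: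
  "re_exp_poly z1 z2 (const_coeffs 1) = (\<lambda>p. exp (lin2 (Re z1) (Re z2) p) * cos (lin2 (Im z1) (Im z2) p))"
  "re_exp_poly z1 z2 (const_coeffs (- \<i>)) = (\<lambda>p. exp (lin2 (Re z1) (Re z2) p) * sin (lin2 (Im z1) (Im z2) p))"
  by (auto simp: fun_eq_iff re_exp_poly_def exp_poly_def quad_poly_def const_coeffs_def lin2_def Re_exp Im_exp)

lemma lin2_zero [simp]: "lin2 0 0 p = 0"
  by (simp add: lin2_def split_beta)

lemma re_exp_poly_real:
  assumes "Im z1 = 0" "Im z2 = 0"
  shows "re_exp_poly z1 z2 (lin_coeffs (of_real v1) (of_real v2))
      = (\<lambda>p. lin2 v1 v2 p * exp (lin2 (Re z1) (Re z2) p))"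
    and "re_exp_poly z1 z2 (quad_coeffs (of_real v1) (of_real v2) (of_real w1) (of_real w2))
      = (\<lambda>p. (lin2 w1 w2 p + (lin2 v1 v2 p)\<^sup>2) * exp (lin2 (Re z1) (Re z2) p))"
  using assms
  by (auto simp: fun_eq_iff re_exp_poly_def exp_poly_def quad_poly_def lin_coeffs_def quad_coeffs_def lin2_def
      Re_exp Im_exp power2_eq_square algebra_simps)

lemma real_poly_deg2_quad: "real_poly_deg2 (\<lambda>p. lin2 w1 w2 p + (lin2 v1 v2 p)\<^sup>2)"
  unfolding real_poly_deg2_def lin2_def
  by (rule exI[of _ 0], rule exI[of _ w1], rule exI[of _ w2], rule exI[of _ "v1\<^sup>2"], rule exI[of _ "2 * v1 * v2"],
      rule exI[of _ "v2\<^sup>2"]) (auto simp: fun_eq_iff power2_eq_square algebra_simps)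

lemma real_poly_deg2_zero: "real_poly_deg2 (\<lambda>p. 0)"
  unfolding real_poly_deg2_def by (intro exI[of _ 0]) (simp add: fun_eq_iff split_beta)

lemma det3_shift:
  "det3 A1 (B1 + s * A1) (C1 + t * A1) A2 (B2 + s * A2) (C2 + t * A2) A3 (B3 + s * A3) (C3 + t * A3)
    = det3 A1 B1 C1 A2 B2 C2 A3 B3 C3"
  by (simp add: det3_def algebra_simps)

lemma real_normal_basisI:
  assumes "fin_basis (QE G) B"
    and "real_linear_fn L1" "real_linear_fn L2" "real_linear_fn L3" "real_poly_deg2 Q"
    and "B = {(\<lambda>p. exp (L1 p) * cos (L2 p)), (\<lambda>p. exp (L1 p) * sin (L2 p)), (\<lambda>p. exp (L3 p))}
      \<or> B = {(\<lambda>p. exp (L1 p)), (\<lambda>p. exp (L2 p)), (\<lambda>p. exp (L3 p))}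
      \<or> B = {(\<lambda>p. exp (L1 p)), (\<lambda>p. L2 p * exp (L1 p)), (\<lambda>p. exp (L3 p))}
      \<or> B = {(\<lambda>p. exp (L1 p)), (\<lambda>p. L2 p * exp (L1 p)), (\<lambda>p. Q p * exp (L1 p))}"
  shows "real_normal_basis G"
  using assms unfolding real_normal_basis_def by blast

subsection \<open>The four configurations\<close>

lemma char_point_const_in_QE:
  fixes a b c d e f :: real
  assumes "char_point (complex_of_real (2 * d - a)) (of_real (2 * c - f)) (of_real b) (of_real e) X Y"
  shows "re_exp_poly (X + of_real d) (Y + of_real c) (const_coeffs s) \<in> QE (GammaA a b c d e f)"
  using assms char_poly_eqs_const by (rule re_exp_poly_in_QE_GammaA)

lemma char_point_exp_in_QEc:
  fixes a b c d e f :: real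
  assumes "char_point (complex_of_real (2 * d - a)) (of_real (2 * c - f)) (of_real b) (of_real e) X Y"
  shows "exp_poly (X + of_real d) (Y + of_real c) (const_coeffs 1) \<in> QEc (GammaA a b c d e f)"
  unfolding exp_poly_const_re_im QEc_def using char_point_const_in_QE[OF assms] by blast

lemma char_point_cnj:
  assumes "char_point (complex_of_real P) (of_real R) (of_real b) (of_real e) X Y"
  shows "char_point (complex_of_real P) (of_real R) (of_real b) (of_real e) (cnj X) (cnj Y)"
proof -
  have "cnj (X * (X + of_real P)) = cnj (of_real b * (Y + of_real R))" "cnj (X * Y) = cnj (of_real b * of_real e)"
    "cnj (Y * (Y + of_real R)) = cnj (of_real e * (X + of_real P))"
    using assms by (simp_all add: char_point_def)
  then show ?thesis by (simp add: char_point_def)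
qed

lemma bases_of_real_exp_polys:
  fixes a b c d e f :: real
  assumes sol: "re_exp_poly z1 w1 q1 \<in> QE (GammaA a b c d e f)" "re_exp_poly z2 w2 q2 \<in> QE (GammaA a b c d e f)"
      "re_exp_poly z3 w3 q3 \<in> QE (GammaA a b c d e f)"
    and jet: "jet_det (re_exp_poly z1 w1 q1) (re_exp_poly z2 w2 q2) (re_exp_poly z3 w3 q3) \<noteq> 0"
    and exps: "exp_poly z1 w1 (const_coeffs 1) \<in> QEc (GammaA a b c d e f)"
      "exp_poly z2 w2 (const_coeffs 1) \<in> QEc (GammaA a b c d e f)"
      "exp_poly z3 w3 (const_coeffs 1) \<in> QEc (GammaA a b c d e f)"
    and real: "Im z1 = 0" "Im w1 = 0" "Im z2 = 0" "Im w2 = 0" "Im z3 = 0" "Im w3 = 0"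
      "\<And>k. Im (q1 k) = 0" "\<And>k. Im (q2 k) = 0" "\<And>k. Im (q3 k) = 0"
  shows "exp_poly_basis (GammaA a b c d e f)"
proof -
  have "fin_basis (QEc (GammaA a b c d e f)) {exp_poly z1 w1 q1, exp_poly z2 w2 q2, exp_poly z3 w3 q3}"
    using QEc_GammaA_basis_of_real[OF sol jet] by (simp add: exp_poly_real real)
  then show ?thesis
    using exps by (rule exp_poly_basisI)
qed

lemma Im_const_coeffs [simp]: "Im (const_coeffs 1 k) = 0"
  by (simp add: const_coeffs_def)

lemma bases_three_real_points:
  fixes a b c d e f :: real
  assumes V: "char_point (2 * d - a) (2 * c - f) b e X1 Y1" "char_point (2 * d - a) (2 * c - f) b e X2 Y2"
      "char_point (2 * d - a) (2 * c - f) b e X3 Y3"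
    and det: "det3 1 X1 Y1 1 X2 Y2 1 X3 Y3 \<noteq> 0"
  shows "exp_poly_basis (GammaA a b c d e f) \<and> real_normal_basis (GammaA a b c d e f)"
proof -
  define g where "g X Y = re_exp_poly (of_real X + of_real d) (of_real Y + of_real c) (const_coeffs 1)" for X Y
  note V' = char_point_of_real[OF V(1)] char_point_of_real[OF V(2)] char_point_of_real[OF V(3)]
  have sol: "g X1 Y1 \<in> QE (GammaA a b c d e f)" "g X2 Y2 \<in> QE (GammaA a b c d e f)"
      "g X3 Y3 \<in> QE (GammaA a b c d e f)"
    unfolding g_def by (rule char_point_const_in_QE V')+
  have "jet_det (g X1 Y1) (g X2 Y2) (g X3 Y3) = det3 1 X1 Y1 1 X2 Y2 1 X3 Y3"
    using det3_shift[of 1 X1 d Y1 c 1 X2 Y2 1 X3 Y3]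
    by (simp add: g_def jet_det_def re_exp_poly_jet0 const_coeffs_def)
  with det have jet: "jet_det (g X1 Y1) (g X2 Y2) (g X3 Y3) \<noteq> 0" by simp
  have "exp_poly_basis (GammaA a b c d e f)"
    using sol jet char_point_exp_in_QEc[OF V'(1)] char_point_exp_in_QEc[OF V'(2)] char_point_exp_in_QEc[OF V'(3)]
    unfolding g_def by (rule bases_of_real_exp_polys) simp_all
  moreover have "real_normal_basis (GammaA a b c d e f)"
  proof (rule real_normal_basisI[of _ _ "lin2 (X1 + d) (Y1 + c)" "lin2 (X2 + d) (Y2 + c)"
        "lin2 (X3 + d) (Y3 + c)" "\<lambda>p. 0"])
    show "fin_basis (QE (GammaA a b c d e f)) {g X1 Y1, g X2 Y2, g X3 Y3}"
      using sol jet by (rule QE_GammaA_basis)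
  qed (simp_all add: g_def re_exp_poly_const real_linear_fn_lin2 real_poly_deg2_zero)
  ultimately show ?thesis ..
qed

lemma bases_double_real_point:
  fixes a b c d e f :: real
  assumes V1: "char_point (2 * d - a) (2 * c - f) b e X1 Y1"
    and J: "char_tangent (2 * d - a) (2 * c - f) b e X1 Y1 v1 v2"
    and V3: "char_point (2 * d - a) (2 * c - f) b e X3 Y3"
    and det: "det3 1 X1 Y1 0 v1 v2 1 X3 Y3 \<noteq> 0"
  shows "exp_poly_basis (GammaA a b c d e f) \<and> real_normal_basis (GammaA a b c d e f)"
proof -
  define g1 g2 g3 where "g1 = re_exp_poly (of_real X1 + of_real d) (of_real Y1 + of_real c) (const_coeffs 1)"
    and "g2 = re_exp_poly (of_real X1 + of_real d) (of_real Y1 + of_real c) (lin_coeffs (of_real v1) (of_real v2))"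
    and "g3 = re_exp_poly (of_real X3 + of_real d) (of_real Y3 + of_real c) (const_coeffs 1)"
  note V' = char_point_of_real[OF V1] char_point_of_real[OF V3]
  have sol: "g1 \<in> QE (GammaA a b c d e f)" "g2 \<in> QE (GammaA a b c d e f)" "g3 \<in> QE (GammaA a b c d e f)"
    unfolding g1_def g2_def g3_def
    by (rule char_point_const_in_QE[OF V'(1)]
        re_exp_poly_in_QE_GammaA[OF V'(1) char_poly_eqs_lin[OF char_tangent_of_real[OF J]]]
        char_point_const_in_QE[OF V'(2)])+
  have "jet_det g1 g2 g3 = det3 1 X1 Y1 0 v1 v2 1 X3 Y3"
    using det3_shift[of 1 X1 d Y1 c 0 v1 v2 1 X3 Y3]
    by (simp add: g1_def g2_def g3_def jet_det_def re_exp_poly_jet0 const_coeffs_def lin_coeffs_def)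
  with det have jet: "jet_det g1 g2 g3 \<noteq> 0" by simp
  have "exp_poly_basis (GammaA a b c d e f)"
    using sol jet char_point_exp_in_QEc[OF V'(1)] char_point_exp_in_QEc[OF V'(1)] char_point_exp_in_QEc[OF V'(2)]
    unfolding g1_def g2_def g3_def by (rule bases_of_real_exp_polys) (simp_all add: lin_coeffs_def)
  moreover have "real_normal_basis (GammaA a b c d e f)"
  proof (rule real_normal_basisI[of _ _ "lin2 (X1 + d) (Y1 + c)" "lin2 v1 v2" "lin2 (X3 + d) (Y3 + c)" "\<lambda>p. 0"])
    show "fin_basis (QE (GammaA a b c d e f)) {g1, g2, g3}"
      using sol jet by (rule QE_GammaA_basis)
  qed (simp_all add: g1_def g2_def g3_def re_exp_poly_const re_exp_poly_real real_linear_fn_lin2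
      real_poly_deg2_zero)
  ultimately show ?thesis ..
qed

lemma bases_triple_real_point:
  fixes a b c d e f :: real
  assumes V: "char_point (2 * d - a) (2 * c - f) b e X1 Y1"
    and J: "char_tangent (2 * d - a) (2 * c - f) b e X1 Y1 v1 v2"
      "char_tangent (2 * d - a) (2 * c - f) b e X1 Y1 u1 u2"
    and T: "char_second_order (2 * d - a) (2 * c - f) b e X1 Y1 u1 u2 w1 w2"
    and det: "det3 1 X1 Y1 0 v1 v2 0 w1 w2 \<noteq> 0"
  shows "exp_poly_basis (GammaA a b c d e f) \<and> real_normal_basis (GammaA a b c d e f)"
proof -
  define g1 g2 g3 where "g1 = re_exp_poly (of_real X1 + of_real d) (of_real Y1 + of_real c) (const_coeffs 1)"
    and "g2 = re_exp_poly (of_real X1 + of_real d) (of_real Y1 + of_real c) (lin_coeffs (of_real v1) (of_real v2))"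
    and "g3 = re_exp_poly (of_real X1 + of_real d) (of_real Y1 + of_real c)
      (quad_coeffs (of_real u1) (of_real u2) (of_real w1) (of_real w2))"
  note V' = char_point_of_real[OF V]
  have sol: "g1 \<in> QE (GammaA a b c d e f)" "g2 \<in> QE (GammaA a b c d e f)" "g3 \<in> QE (GammaA a b c d e f)"
    unfolding g1_def g2_def g3_def
    by (rule char_point_const_in_QE[OF V']
        re_exp_poly_in_QE_GammaA[OF V' char_poly_eqs_lin[OF char_tangent_of_real[OF J(1)]]]
        re_exp_poly_in_QE_GammaA[OF V' char_poly_eqs_quad[OF char_tangent_of_real[OF J(2)]
          char_second_order_of_real[OF T]]])+
  have "jet_det g1 g2 g3 = det3 1 X1 Y1 0 v1 v2 0 w1 w2"
    using det3_shift[of 1 X1 d Y1 c 0 v1 v2 0 w1 w2]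
    by (simp add: g1_def g2_def g3_def jet_det_def re_exp_poly_jet0 const_coeffs_def lin_coeffs_def quad_coeffs_def)
  with det have jet: "jet_det g1 g2 g3 \<noteq> 0" by simp
  have "exp_poly_basis (GammaA a b c d e f)"
    using sol jet char_point_exp_in_QEc[OF V'] char_point_exp_in_QEc[OF V'] char_point_exp_in_QEc[OF V']
    unfolding g1_def g2_def g3_def by (rule bases_of_real_exp_polys) (simp_all add: lin_coeffs_def quad_coeffs_def)
  moreover have "real_normal_basis (GammaA a b c d e f)"
  proof (rule real_normal_basisI[of _ _ "lin2 (X1 + d) (Y1 + c)" "lin2 v1 v2" "lin2 (X1 + d) (Y1 + c)"
        "\<lambda>p. lin2 w1 w2 p + (lin2 u1 u2 p)\<^sup>2"])
    show "fin_basis (QE (GammaA a b c d e f)) {g1, g2, g3}"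
      using sol jet by (rule QE_GammaA_basis)
  qed (simp_all add: g1_def g2_def g3_def re_exp_poly_const re_exp_poly_real real_linear_fn_lin2
      real_poly_deg2_quad)
  ultimately show ?thesis ..
qed

lemma bases_complex_point:
  fixes a b c d e f :: real
  assumes V: "char_point (complex_of_real (2 * d - a)) (of_real (2 * c - f)) (of_real b) (of_real e) Z1 Z2"
    and V3: "char_point (2 * d - a) (2 * c - f) b e X3 Y3"
    and det: "det3 1 (Re Z1) (Re Z2) 0 (Im Z1) (Im Z2) 1 X3 Y3 \<noteq> 0"
  shows "exp_poly_basis (GammaA a b c d e f) \<and> real_normal_basis (GammaA a b c d e f)"
proof -
  define g1 g2 g3 where "g1 = re_exp_poly (Z1 + of_real d) (Z2 + of_real c) (const_coeffs 1)"
    and "g2 = re_exp_poly (Z1 + of_real d) (Z2 + of_real c) (const_coeffs (- \<i>))"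
    and "g3 = re_exp_poly (of_real X3 + of_real d) (of_real Y3 + of_real c) (const_coeffs 1)"
  note V3' = char_point_of_real[OF V3]
  have sol: "g1 \<in> QE (GammaA a b c d e f)" "g2 \<in> QE (GammaA a b c d e f)" "g3 \<in> QE (GammaA a b c d e f)"
    unfolding g1_def g2_def g3_def by (rule char_point_const_in_QE V V3')+
  have neg: "(\<lambda>p. - g2 p) \<in> QE (GammaA a b c d e f)"
    using char_point_const_in_QE[OF V, of \<i>] by (simp add: g2_def re_exp_poly_const_uminus)
  have "jet_det g1 g2 g3 = det3 1 (Re Z1) (Re Z2) 0 (Im Z1) (Im Z2) 1 X3 Y3"
    using det3_shift[of 1 "Re Z1" d "Re Z2" c 0 "Im Z1" "Im Z2" 1 X3 Y3]
    by (simp add: g1_def g2_def g3_def jet_det_def re_exp_poly_jet0 const_coeffs_def)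
  with det have jet: "jet_det g1 g2 g3 \<noteq> 0" by simp
  have "fin_basis (QEc (GammaA a b c d e f)) {exp_poly (Z1 + of_real d) (Z2 + of_real c) (const_coeffs 1),
      exp_poly (cnj Z1 + of_real d) (cnj Z2 + of_real c) (const_coeffs 1),
      exp_poly (of_real X3 + of_real d) (of_real Y3 + of_real c) (const_coeffs 1)}"
  proof -
    have "exp_poly (Z1 + of_real d) (Z2 + of_real c) (const_coeffs 1) = (\<lambda>p. of_real (g1 p) + \<i> * of_real (g2 p))"
      unfolding g1_def g2_def by (rule exp_poly_const_re_im(1))
    moreover have "exp_poly (cnj Z1 + of_real d) (cnj Z2 + of_real c) (const_coeffs 1)
        = (\<lambda>p. of_real (g1 p) - \<i> * of_real (g2 p))"
      using exp_poly_const_re_im(2)[of "Z1 + of_real d" "Z2 + of_real c"] by (simp add: g1_def g2_def)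
    moreover have "exp_poly (of_real X3 + of_real d) (of_real Y3 + of_real c) (const_coeffs 1) = (\<lambda>p. of_real (g3 p))"
      unfolding g3_def by (rule exp_poly_real) simp_all
    ultimately show ?thesis
      using QEc_GammaA_basis_conj[OF sol jet neg] by simp
  qed
  then have "exp_poly_basis (GammaA a b c d e f)"
    by (rule exp_poly_basisI) (rule char_point_exp_in_QEc char_point_cnj V V3')+
  moreover have "real_normal_basis (GammaA a b c d e f)"
  proof (rule real_normal_basisI[of _ _ "lin2 (Re Z1 + d) (Re Z2 + c)" "lin2 (Im Z1) (Im Z2)"
        "lin2 (X3 + d) (Y3 + c)" "\<lambda>p. 0"])
    show "fin_basis (QE (GammaA a b c d e f)) {g1, g2, g3}"
      using sol jet by (rule QE_GammaA_basis)
  qed (simp_all add: g1_def g2_def g3_def re_exp_poly_const real_linear_fn_lin2 real_poly_deg2_zero)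
  ultimately show ?thesis ..
qed

subsection \<open>Points of the characteristic variety\<close>

lemma real_cubic_has_root: "\<exists>x::real. x ^ 3 + A * x\<^sup>2 + B * x + C = 0"
proof -
  let ?c = "\<lambda>x::real. x ^ 3 + A * x\<^sup>2 + B * x + C"
  have "eventually (\<lambda>x. ?c x > 0) at_top" "eventually (\<lambda>x. ?c x < 0) at_bot"
    by real_asymp+
  then obtain M N where M: "\<forall>x\<ge>M. ?c x > 0" and N: "\<forall>x\<le>N. ?c x < 0"
    by (auto simp: eventually_at_top_linorder eventually_at_bot_linorder)
  have "?c (min N M) \<le> 0" "0 \<le> ?c (max N M)" "min N M \<le> max N M"
    using M N by (auto intro: less_imp_le)
  moreover have "isCont ?c x" for x
    by (intro continuous_intros)
  ultimately show ?thesis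
    using IVT[of ?c "min N M" 0 "max N M"] by blast
qed

lemma cubic_factor:
  fixes A B C x x0 :: "'a::comm_ring_1"
  assumes "x0 ^ 3 + A * x0\<^sup>2 + B * x0 + C = 0"
  shows "x ^ 3 + A * x\<^sup>2 + B * x + C = (x - x0) * (x\<^sup>2 + (A + x0) * x + (x0\<^sup>2 + A * x0 + B))"
  using assms by (simp add: algebra_simps power2_eq_square power3_eq_cube)

lemma cubic_deriv_factor:
  fixes A B x x0 :: "'a::comm_ring_1"
  shows "3 * x\<^sup>2 + 2 * A * x + B = (x\<^sup>2 + (A + x0) * x + (x0\<^sup>2 + A * x0 + B)) + (x - x0) * (2 * x + (A + x0))"
  by (simp add: algebra_simps power2_eq_square)

lemma real_quadratic_root_cases:
  fixes p q :: real
  obtains (two) r1 r2 where "r1\<^sup>2 + p * r1 + q = 0" "r2\<^sup>2 + p * r2 + q = 0" "r1 \<noteq> r2"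
  | (double) r where "r\<^sup>2 + p * r + q = 0" "2 * r + p = 0"
  | (complex) s t where "t \<noteq> 0" "(Complex s t)\<^sup>2 + of_real p * Complex s t + of_real q = 0"
proof -
  define D where "D = p\<^sup>2 - 4 * q"
  consider "D > 0" | "D = 0" | "D < 0" by linarith
  then show ?thesis
  proof cases
    case 1
    then show ?thesis
      by (intro two[of "(- p + sqrt D) / 2" "(- p - sqrt D) / 2"])
        (simp_all add: D_def field_simps power2_eq_square)
  next
    case 2
    then show ?thesis
      by (intro double[of "- p / 2"]) (simp_all add: D_def field_simps power2_eq_square)
  next
    case 3
    then show ?thesis
      by (intro complex[of "sqrt (- D) / 2" "- p / 2"])
        (simp_all add: complex_eq_iff D_def power2_eq_square field_simps)
  qed
qed

lemma real_cubic_root_cases: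
  fixes A B C :: real
  obtains (three) x1 x2 x3 where "x1 ^ 3 + A * x1\<^sup>2 + B * x1 + C = 0" "x2 ^ 3 + A * x2\<^sup>2 + B * x2 + C = 0"
      "x3 ^ 3 + A * x3\<^sup>2 + B * x3 + C = 0" "x1 \<noteq> x2" "x1 \<noteq> x3" "x2 \<noteq> x3"
  | (complex) x s t where "x ^ 3 + A * x\<^sup>2 + B * x + C = 0" "t \<noteq> 0"
      "Complex s t ^ 3 + of_real A * (Complex s t)\<^sup>2 + of_real B * Complex s t + of_real C = 0"
  | (double) x y where "x ^ 3 + A * x\<^sup>2 + B * x + C = 0" "3 * x\<^sup>2 + 2 * A * x + B = 0"
      "y ^ 3 + A * y\<^sup>2 + B * y + C = 0" "x \<noteq> y"
  | (triple) x where "x ^ 3 + A * x\<^sup>2 + B * x + C = 0" "3 * x\<^sup>2 + 2 * A * x + B = 0" "3 * x + A = 0"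
proof -
  obtain x0 where x0: "x0 ^ 3 + A * x0\<^sup>2 + B * x0 + C = 0"
    using real_cubic_has_root by blast
  define p q where "p = A + x0" and "q = x0\<^sup>2 + A * x0 + B"
  have root: "x ^ 3 + A * x\<^sup>2 + B * x + C = 0" if "x\<^sup>2 + p * x + q = 0" for x
    using cubic_factor[OF x0, of x] that by (simp add: p_def q_def)
  have double_root: "3 * r\<^sup>2 + 2 * A * r + B = 0"
    if "r\<^sup>2 + p * r + q = 0" "r = x0 \<or> 2 * r + p = 0" for r
    using cubic_deriv_factor[of r A B x0, folded p_def q_def] that by auto
  from real_quadratic_root_cases[of p q] show ?thesis
  proof cases
    case (two r1 r2)
    consider "r1 \<noteq> x0" "r2 \<noteq> x0" | "r1 = x0" | "r2 = x0" by blast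
    then show ?thesis
    proof cases
      case 1
      then show ?thesis using that(1)[OF x0 root root] two by auto
    next
      case 2
      then show ?thesis using that(3)[OF x0 double_root root] two by auto
    next
      case 3
      then show ?thesis using that(3)[OF x0 double_root root] two by auto
    qed
  next
    case (double r)
    show ?thesis
    proof (cases "r = x0")
      case True
      then show ?thesis using that(4)[OF x0] double_root[of r] double by (simp add: p_def)
    next
      case False
      then show ?thesis using that(3)[OF root double_root x0] double by simp
    qed
  next
    case (complex s t)
    have "Complex s t ^ 3 + of_real A * (Complex s t)\<^sup>2 + of_real B * Complex s t + of_real C = 0"
      using cubic_factor[of "of_real x0" "of_real A" "of_real B" "of_real C" "Complex s t"] x0 complex(2)
      by (simp add: p_def q_def flip: of_real_power of_real_mult of_real_add)
    then show ?thesis using that(2)[OF x0 complex(1)] by blast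
  qed
qed

(* The four root configurations of the cubic whose roots parametrise the char_points when b \<noteq> 0. *)

inductive char_config :: "real \<Rightarrow> real \<Rightarrow> real \<Rightarrow> real \<Rightarrow> bool" for P R b e where
  complex: "char_point (complex_of_real P) (of_real R) (of_real b) (of_real e) Z1 Z2
    \<Longrightarrow> char_point P R b e X3 Y3 \<Longrightarrow> det3 1 (Re Z1) (Re Z2) 0 (Im Z1) (Im Z2) 1 X3 Y3 \<noteq> 0
    \<Longrightarrow> char_config P R b e"
| three: "char_point P R b e X1 Y1 \<Longrightarrow> char_point P R b e X2 Y2 \<Longrightarrow> char_point P R b e X3 Y3
    \<Longrightarrow> det3 1 X1 Y1 1 X2 Y2 1 X3 Y3 \<noteq> 0 \<Longrightarrow> char_config P R b e"
| double: "char_point P R b e X1 Y1 \<Longrightarrow> char_tangent P R b e X1 Y1 v1 v2 \<Longrightarrow> char_point P R b e X3 Y3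
    \<Longrightarrow> det3 1 X1 Y1 0 v1 v2 1 X3 Y3 \<noteq> 0 \<Longrightarrow> char_config P R b e"
| triple: "char_point P R b e X1 Y1 \<Longrightarrow> char_tangent P R b e X1 Y1 v1 v2 \<Longrightarrow> char_tangent P R b e X1 Y1 u1 u2
    \<Longrightarrow> char_second_order P R b e X1 Y1 u1 u2 w1 w2 \<Longrightarrow> det3 1 X1 Y1 0 v1 v2 0 w1 w2 \<noteq> 0
    \<Longrightarrow> char_config P R b e"

lemma char_point_on_cubic:
  fixes P R b e X :: "'a::field"
  assumes b: "b \<noteq> 0" and "X ^ 3 + P * X\<^sup>2 - b * R * X - b\<^sup>2 * e = 0"
  shows "char_point P R b e X ((X\<^sup>2 + P * X - b * R) / b)"
proof -
  have e: "e = (X ^ 3 + P * X\<^sup>2 - b * R * X) / b\<^sup>2" using assms by (simp add: field_simps)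
  show ?thesis unfolding char_point_def using b
    by (simp add: e field_simps power2_eq_square power3_eq_cube; simp add: algebra_simps)
qed

lemma char_tangent_on_cubic:
  fixes P R b e X :: "'a::field"
  assumes b: "b \<noteq> 0" and "X ^ 3 + P * X\<^sup>2 - b * R * X - b\<^sup>2 * e = 0" and "3 * X\<^sup>2 + 2 * P * X - b * R = 0"
  shows "char_tangent P R b e X ((X\<^sup>2 + P * X - b * R) / b) 1 ((2 * X + P) / b)"
proof -
  have e: "e = (X ^ 3 + P * X\<^sup>2 - b * R * X) / b\<^sup>2" and R: "R = (3 * X\<^sup>2 + 2 * P * X) / b"
    using assms by (simp_all add: field_simps)
  show ?thesis unfolding char_tangent_def using b
    by (simp add: e R field_simps power2_eq_square power3_eq_cube; simp add: algebra_simps)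
qed

lemma char_second_order_on_cubic:
  fixes P R b e X :: "'a::field"
  assumes b: "b \<noteq> 0" and "X ^ 3 + P * X\<^sup>2 - b * R * X - b\<^sup>2 * e = 0" and "3 * X\<^sup>2 + 2 * P * X - b * R = 0"
    and "3 * X + P = 0"
  shows "char_second_order P R b e X ((X\<^sup>2 + P * X - b * R) / b) 1 ((2 * X + P) / b) 0 (2 / b)"
proof -
  have e: "e = (X ^ 3 + P * X\<^sup>2 - b * R * X) / b\<^sup>2" and R: "R = (3 * X\<^sup>2 + 2 * P * X) / b"
    and P: "P = - (3 * X)"
    using assms by (simp_all add: field_simps eq_neg_iff_add_eq_0 add.commute)
  show ?thesis unfolding char_second_order_def using b
    by (simp add: e R P field_simps power2_eq_square power3_eq_cube; simp add: algebra_simps)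
qed

lemma char_point_complex_on_cubic:
  fixes P R b e s t :: real
  assumes b: "b \<noteq> 0"
    and "Complex s t ^ 3 + of_real P * (Complex s t)\<^sup>2 + of_real (- (b * R)) * Complex s t
      + of_real (- (b\<^sup>2 * e)) = 0"
  shows "char_point (complex_of_real P) (of_real R) (of_real b) (of_real e) (Complex s t)
    (Complex ((s\<^sup>2 - t\<^sup>2 + P * s - b * R) / b) ((2 * s * t + P * t) / b))"
proof -
  let ?Z = "Complex s t"
  have "?Z ^ 3 + of_real P * ?Z\<^sup>2 - of_real b * of_real R * ?Z - (of_real b)\<^sup>2 * of_real e = 0"
    using assms(2) by simp
  from char_point_on_cubic[OF _ this] b
  have "char_point (complex_of_real P) (of_real R) (of_real b) (of_real e) ?Z
      ((?Z\<^sup>2 + of_real P * ?Z - of_real b * of_real R) / of_real b)"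
    by simp
  moreover have "(?Z\<^sup>2 + of_real P * ?Z - of_real b * of_real R) / of_real b
      = Complex ((s\<^sup>2 - t\<^sup>2 + P * s - b * R) / b) ((2 * s * t + P * t) / b)"
    using b by (simp add: complex_eq_iff power2_eq_square field_simps)
  ultimately show ?thesis by simp
qed

lemma det3_parabola:
  fixes b P R x y z s t :: real
  assumes b: "b \<noteq> 0" and g: "\<And>x. g x = (x\<^sup>2 + P * x - b * R) / b"
  shows "det3 1 x (g x) 1 y (g y) 1 z (g z) = (y - x) * (z - x) * (z - y) / b"
    and "det3 1 x (g x) 0 1 ((2 * x + P) / b) 1 z (g z) = (z - x)\<^sup>2 / b"
    and "det3 1 x (g x) 0 1 ((2 * x + P) / b) 0 0 (2 / b) = 2 / b"
    and "det3 1 s ((s\<^sup>2 - t\<^sup>2 + P * s - b * R) / b) 0 t ((2 * s * t + P * t) / b) 1 z (g z)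
      = t * ((z - s)\<^sup>2 + t\<^sup>2) / b"
  using b unfolding g det3_def
  by (simp_all add: field_simps power2_eq_square; simp add: algebra_simps)+

lemma char_config_b_nonzero:
  fixes P R b e :: real
  assumes b: "b \<noteq> 0"
  shows "char_config P R b e"
proof -
  define g where "g x = (x\<^sup>2 + P * x - b * R) / b" for x :: real
  have pt: "char_point P R b e x (g x)" if "x ^ 3 + P * x\<^sup>2 + - (b * R) * x + - (b\<^sup>2 * e) = 0" for x
    using char_point_on_cubic[OF b, of x P R e] that by (simp add: g_def)
  have tan: "char_tangent P R b e x (g x) 1 ((2 * x + P) / b)"
    if "x ^ 3 + P * x\<^sup>2 + - (b * R) * x + - (b\<^sup>2 * e) = 0" "3 * x\<^sup>2 + 2 * P * x + - (b * R) = 0" for x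
    using char_tangent_on_cubic[OF b, of x P R e] that by (simp add: g_def)
  note det = det3_parabola[OF b g_def]
  show ?thesis
  proof (cases rule: real_cubic_root_cases[of P "- (b * R)" "- (b\<^sup>2 * e)"])
    case (three x1 x2 x3)
    then show ?thesis
      using b by (intro char_config.three[OF pt[OF three(1)] pt[OF three(2)] pt[OF three(3)]]) (simp add: det)
  next
    case (complex x s t)
    let ?Y = "Complex ((s\<^sup>2 - t\<^sup>2 + P * s - b * R) / b) ((2 * s * t + P * t) / b)"
    have "(x - s)\<^sup>2 + t\<^sup>2 > 0" using complex(2) by (simp add: add_nonneg_pos)
    then have "det3 1 (Re (Complex s t)) (Re ?Y) 0 (Im (Complex s t)) (Im ?Y) 1 x (g x) \<noteq> 0"
      using det(4)[of s t x] complex(2) b by simp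
    with char_point_complex_on_cubic[OF b complex(3)] pt[OF complex(1)] show ?thesis
      by (rule char_config.complex)
  next
    case (double x y)
    then show ?thesis
      using b by (intro char_config.double[OF pt[OF double(1)] tan[OF double(1,2)] pt[OF double(3)]])
        (simp add: det)
  next
    case (triple x)
    have "char_second_order P R b e x (g x) 1 ((2 * x + P) / b) 0 (2 / b)"
      using char_second_order_on_cubic[OF b, of x P R e] triple by (simp add: g_def)
    moreover have "det3 1 x (g x) 0 1 ((2 * x + P) / b) 0 0 (2 / b) \<noteq> 0"
      using b by (simp add: det(3))
    ultimately show ?thesis
      by (intro char_config.triple[OF pt[OF triple(1)] tan[OF triple(1,2)] tan[OF triple(1,2)]])
  qed
qed

lemma char_config_b_e_zero: "char_config P R 0 0"
proof (cases "P = 0"; cases "R = 0")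
  assume "P = 0" "R = 0"
  then show ?thesis
    by (intro char_config.triple[of P R 0 0 0 0 1 0 0 0 0 1])
      (simp_all add: char_point_def char_tangent_def char_second_order_def det3_def)
next
  assume "P = 0" "R \<noteq> 0"
  then show ?thesis
    by (intro char_config.double[of P R 0 0 0 0 1 0 0 "- R"]) (simp_all add: char_point_def char_tangent_def det3_def)
next
  assume "P \<noteq> 0" "R = 0"
  then show ?thesis
    by (intro char_config.double[of P R 0 0 0 0 0 1 "- P" 0]) (simp_all add: char_point_def char_tangent_def det3_def)
next
  assume "P \<noteq> 0" "R \<noteq> 0"
  then show ?thesis
    by (intro char_config.three[of P R 0 0 0 0 "- P" 0 0 "- R"]) (simp_all add: char_point_def det3_def)
qed

lemma char_point_swap: "char_point R P e b Y X \<longleftrightarrow> char_point P R b e X Y"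
  unfolding char_point_def by (auto simp: mult.commute)

lemma char_tangent_swap: "char_tangent R P e b Y X v2 v1 \<longleftrightarrow> char_tangent P R b e X Y v1 v2"
  unfolding char_tangent_def by (auto simp: algebra_simps)

lemma char_second_order_swap:
  "char_second_order R P e b Y X v2 v1 w2 w1 \<longleftrightarrow> char_second_order P R b e X Y v1 v2 w1 w2"
  unfolding char_second_order_def by (auto simp: algebra_simps)

lemma det3_swap23: "det3 A1 C1 B1 A2 C2 B2 A3 C3 B3 = - det3 A1 B1 C1 A2 B2 C2 A3 B3 C3"
  by (simp add: det3_def algebra_simps)

lemma char_config_swap:
  assumes "char_config R P e b"
  shows "char_config P R b e"
  using assms
proof cases
  case (complex Z1 Z2 X3 Y3)
  then show ?thesis
    by (intro char_config.complex[of P R b e Z2 Z1 Y3 X3])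
      (simp_all add: char_point_swap det3_swap23[of 1 "Re Z2" "Re Z1" 0 "Im Z2" "Im Z1" 1 Y3 X3])
next
  case (three X1 Y1 X2 Y2 X3 Y3)
  then show ?thesis
    by (intro char_config.three[of P R b e Y1 X1 Y2 X2 Y3 X3])
      (simp_all add: char_point_swap det3_swap23[of 1 Y1 X1 1 Y2 X2 1 Y3 X3])
next
  case (double X1 Y1 v1 v2 X3 Y3)
  then show ?thesis
    by (intro char_config.double[of P R b e Y1 X1 v2 v1 Y3 X3])
      (simp_all add: char_point_swap char_tangent_swap det3_swap23[of 1 Y1 X1 0 v2 v1 1 Y3 X3])
next
  case (triple X1 Y1 v1 v2 u1 u2 w1 w2)
  then show ?thesis
    by (intro char_config.triple[of P R b e Y1 X1 v2 v1 u2 u1 w2 w1])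
      (simp_all add: char_point_swap char_tangent_swap char_second_order_swap
        det3_swap23[of 1 Y1 X1 0 v2 v1 0 w2 w1])
qed

lemma char_config_exists: "char_config P R b e"
proof -
  consider "b \<noteq> 0" | "b = 0" "e \<noteq> 0" | "b = 0" "e = 0" by blast
  then show ?thesis
  proof cases
    case 2
    then show ?thesis by (intro char_config_swap[OF char_config_b_nonzero])
  qed (simp_all add: char_config_b_nonzero char_config_b_e_zero)
qed

theorem theorem2p2:
  fixes a b c d e f :: real
  defines "G \<equiv> GammaA a b c d e f"
  shows
   "(\<exists>B. fin_basis (QEc G) B \<and>
       (\<forall>u\<in>B. \<exists>(\<alpha>1::complex) \<alpha>2 (p0::complex) p1 p2 p3 p4 p5.
          (\<lambda>(x, y). exp (\<alpha>1 * complex_of_real x + \<alpha>2 * complex_of_real y)) \<in> QEc G \<and>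
          u = (\<lambda>(x, y). exp (\<alpha>1 * complex_of_real x + \<alpha>2 * complex_of_real y) *
                 (p0 + p1 * complex_of_real x + p2 * complex_of_real y + p3 * (complex_of_real x)\<^sup>2
                  + p4 * complex_of_real x * complex_of_real y + p5 * (complex_of_real y)\<^sup>2))))
    \<and>
    (\<exists>L1 L2 L3 Q B. real_linear_fn L1 \<and> real_linear_fn L2 \<and> real_linear_fn L3 \<and> real_poly_deg2 Q \<and>
       fin_basis (QE G) B \<and>
       (B = {(\<lambda>p. exp (L1 p) * cos (L2 p)), (\<lambda>p. exp (L1 p) * sin (L2 p)), (\<lambda>p. exp (L3 p))}
      \<or> B = {(\<lambda>p. exp (L1 p)), (\<lambda>p. exp (L2 p)), (\<lambda>p. exp (L3 p))}
      \<or> B = {(\<lambda>p. exp (L1 p)), (\<lambda>p. L2 p * exp (L1 p)), (\<lambda>p. exp (L3 p))}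
      \<or> B = {(\<lambda>p. exp (L1 p)), (\<lambda>p. L2 p * exp (L1 p)), (\<lambda>p. Q p * exp (L1 p))}))"
proof -
  from char_config_exists[of "2 * d - a" "2 * c - f" b e]
  have "exp_poly_basis (GammaA a b c d e f) \<and> real_normal_basis (GammaA a b c d e f)"
  proof cases
    case complex
    then show ?thesis by (rule bases_complex_point)
  next
    case three
    then show ?thesis by (rule bases_three_real_points)
  next
    case double
    then show ?thesis by (rule bases_double_real_point)
  next
    case triple
    then show ?thesis by (rule bases_triple_real_point)
  qed
  then show ?thesis
    by (simp only: G_def exp_poly_basis_def real_normal_basis_def)
qed

end
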